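(* Let $\phi\colon\mathbb{R}\to\mathbb{R}$ be an increasing homeomorphism with $\phi(0)=0$, let $f\colon\mathbb{R}\to\mathbb{R}$ be continuous, and let $h\colon[0,T]\times\mathbb{R}\to\mathbb{R}$ be a Carathéodory function satisfying: $(A_0)$ for all $t_0\in[0,T]$, $u_0\in\mathbb{R}$ and $\varepsilon>0$ there exists $\delta>0$ such that if $|t-t_0|<\delta$ and $|u-u_0|<\delta$ then $|h(t,u)-h(t,u_0)|<\varepsilon$ for a.e. $t$. Let $b>0$ and $\beta\in\mathfrak{D}$ be such that $$(\phi(\beta'(t)))'+f(\beta(t))\beta'(t)+h(t,\beta(t))\le -b\quad\text{for a.e. }t\in[0,T].$$ Then $\beta$ is a strict upper solution to $(\phi(u'))'+f(u)u'+h(t,u)=0$.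
   Context: $\mathcal{C}^1_T=\{u\in\mathcal{C}^1([0,T]):u(0)=u(T),\,u'(0)=u'(T)\}$ and $\mathfrak{D}=\{u\in\mathcal{C}^1_T:\phi(u')\text{ is absolutely continuous}\}$. A $T$-periodic solution of $(\phi(u'))'+f(u)u'+h(t,u)=0$ is a $u\in\mathfrak{D}$ satisfying the equation a.e. A function $\beta\in\mathfrak{D}$ is a strict upper solution of this equation if $(\phi(\beta'))'+f(\beta)\beta'+h(t,\beta)<0$ for a.e. $t\in[0,T]$ and, whenever $u$ is a $T$-periodic solution with $u(t)\le\beta(t)$ for all $t\in[0,T]$, then $u(t)<\beta(t)$ for all $t\in[0,T]$. A Carathéodory function is measurable in $t$, continuous in $u$, and for each $r>0$ bounded in absolute value on $[0,T]\times[-r,r]$ by an $L^1$ function of $t$. *)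

theory Defs
  imports "HOL-Analysis.Analysis"
begin

definition dT :: "real \<Rightarrow> (real \<Rightarrow> real) \<Rightarrow> real \<Rightarrow> real" where
  "dT T u t = (THE d. (u has_real_derivative d) (at t within {0..T}))"

definition abs_continuous_on :: "real \<Rightarrow> real \<Rightarrow> (real \<Rightarrow> real) \<Rightarrow> bool" where
  "abs_continuous_on lo hi g \<longleftrightarrow>
     (\<forall>\<epsilon>>0. \<exists>\<delta>>0. \<forall>(n::nat) (a::nat \<Rightarrow> real) (b::nat \<Rightarrow> real).
        (\<forall>i<n. lo \<le> a i \<and> a i \<le> b i \<and> b i \<le> hi) \<and>
        (\<forall>i<n. \<forall>j<n. i \<noteq> j \<longrightarrow> b i \<le> a j \<or> b j \<le> a i) \<and>
        (\<Sum>i<n. b i - a i) < \<delta>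
        \<longrightarrow> (\<Sum>i<n. \<bar>g (b i) - g (a i)\<bar>) < \<epsilon>)"

definition C1T :: "real \<Rightarrow> (real \<Rightarrow> real) \<Rightarrow> bool" where
  "C1T T u \<longleftrightarrow>
     (\<forall>t\<in>{0..T}. u differentiable (at t within {0..T})) \<and>
     continuous_on {0..T} (dT T u) \<and>
     u 0 = u T \<and> dT T u 0 = dT T u T"

definition DD :: "real \<Rightarrow> (real \<Rightarrow> real) \<Rightarrow> (real \<Rightarrow> real) \<Rightarrow> bool" where
  "DD T \<phi> u \<longleftrightarrow> C1T T u \<and> abs_continuous_on 0 T (\<lambda>s. \<phi> (dT T u s))"

definition Lop :: "real \<Rightarrow> (real \<Rightarrow> real) \<Rightarrow> (real \<Rightarrow> real) \<Rightarrow> (real \<Rightarrow> real \<Rightarrow> real)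
                    \<Rightarrow> (real \<Rightarrow> real) \<Rightarrow> real \<Rightarrow> real" where
  "Lop T \<phi> f h u t = dT T (\<lambda>s. \<phi> (dT T u s)) t + f (u t) * dT T u t + h t (u t)"

definition periodic_solution ::
  "real \<Rightarrow> (real \<Rightarrow> real) \<Rightarrow> (real \<Rightarrow> real) \<Rightarrow> (real \<Rightarrow> real \<Rightarrow> real) \<Rightarrow> (real \<Rightarrow> real) \<Rightarrow> bool" where
  "periodic_solution T \<phi> f h u \<longleftrightarrow>
     DD T \<phi> u \<and> (AE t in lebesgue. t \<in> {0..T} \<longrightarrow> Lop T \<phi> f h u t = 0)"

definition strict_upper_solution ::
  "real \<Rightarrow> (real \<Rightarrow> real) \<Rightarrow> (real \<Rightarrow> real) \<Rightarrow> (real \<Rightarrow> real \<Rightarrow> real) \<Rightarrow> (real \<Rightarrow> real) \<Rightarrow> bool" where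
  "strict_upper_solution T \<phi> f h \<beta> \<longleftrightarrow>
     DD T \<phi> \<beta> \<and>
     (AE t in lebesgue. t \<in> {0..T} \<longrightarrow> Lop T \<phi> f h \<beta> t < 0) \<and>
     (\<forall>u. periodic_solution T \<phi> f h u \<and> (\<forall>t\<in>{0..T}. u t \<le> \<beta> t)
          \<longrightarrow> (\<forall>t\<in>{0..T}. u t < \<beta> t))"

definition caratheodory :: "real \<Rightarrow> (real \<Rightarrow> real \<Rightarrow> real) \<Rightarrow> bool" where
  "caratheodory T h \<longleftrightarrow>
     (\<forall>u. (\<lambda>t. h t u) \<in> borel_measurable (lebesgue_on {0..T})) \<and>
     (\<forall>t\<in>{0..T}. continuous_on UNIV (h t)) \<and>
     (\<forall>r>0. \<exists>g. g absolutely_integrable_on {0..T} \<and>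
        (\<forall>t\<in>{0..T}. \<forall>u. \<bar>u\<bar> \<le> r \<longrightarrow> \<bar>h t u\<bar> \<le> g t))"

end

theory Submission
  imports Defs
begin

text \<open>
  Suppose a T-periodic solution u \<le> \<beta> touches \<beta>. At a touching point t0 the slopes agree as
  well, since u - \<beta> has a maximum there (at the endpoints by periodicity). Subtracting the
  equation for u from the inequality for \<beta> and using (A0) and continuity, the absolutely
  continuous function \<phi>(u') - \<phi>(\<beta>'), which vanishes at t0, has derivative at least b/4
  almost everywhere just to the right of t0. Hence it is positive there, so u' > \<beta>' and
  u - \<beta> becomes positive, a contradiction.

  Absolute continuity is meant in the classical \<epsilon>-\<delta> sense. Its two consequences used above,
  differentiability almost everywhere and strict increase under an a.e. positive lower bound on
  the derivative, both follow from the Vitali covering theorem by Lebesgue's classical argument.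
\<close>

section \<open>Difference quotients over straddling intervals\<close>

definition straddle :: "real \<Rightarrow> (real \<times> real) filter" where
  "straddle x = (INF d\<in>{0<..}. principal {(p, q). p \<le> x \<and> x \<le> q \<and> p < q \<and> q - p < d})"

lemma eventually_straddle:
  "eventually P (straddle x) \<longleftrightarrow>
     (\<exists>d>0. \<forall>p q. p \<le> x \<longrightarrow> x \<le> q \<longrightarrow> p < q \<longrightarrow> q - p < d \<longrightarrow> P (p, q))"
  unfolding straddle_def
proof (subst eventually_INF_base)
  fix d e :: real assume "d \<in> {0<..}" "e \<in> {0<..}"
  then show "\<exists>m\<in>{0<..}. principal {(p, q). p \<le> x \<and> x \<le> q \<and> p < q \<and> q - p < m} \<le>
      inf (principal {(p, q). p \<le> x \<and> x \<le> q \<and> p < q \<and> q - p < d})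
          (principal {(p, q). p \<le> x \<and> x \<le> q \<and> p < q \<and> q - p < e})"
    by (intro bexI[of _ "min d e"]) auto
qed (auto simp: eventually_principal)

lemma frequently_straddle:
  "frequently P (straddle x) \<longleftrightarrow>
     (\<forall>d>0. \<exists>p q. p \<le> x \<and> x \<le> q \<and> p < q \<and> q - p < d \<and> P (p, q))"
  unfolding frequently_def eventually_straddle by blast

lemma straddle_neq_bot [simp]: "straddle x \<noteq> bot"
proof -
  have "frequently (\<lambda>_. True) (straddle x)"
    unfolding frequently_straddle
  proof (intro allI impI)
    fix d :: real assume "d > 0"
    then show "\<exists>p q. p \<le> x \<and> x \<le> q \<and> p < q \<and> q - p < d \<and> True"
      by (intro exI[of _ x] exI[of _ "x + d / 2"]) auto
  qed
  then show ?thesis by (auto simp: frequently_def)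
qed

lemma eventually_straddle_inside:
  assumes "a < x" "x < b"
  shows "eventually (\<lambda>(p, q). a < p \<and> q < b) (straddle x)"
  unfolding eventually_straddle using assms
  by (intro exI[of _ "min (x - a) (b - x)"]) auto

lemma filterlim_straddle_at_right: "filterlim (\<lambda>y. (x, y)) (straddle x) (at_right x)"
proof -
  have "eventually (\<lambda>y. P (x, y)) (at_right x)" if "eventually P (straddle x)" for P
  proof -
    from that obtain d where "d > 0" "\<forall>p q. p \<le> x \<longrightarrow> x \<le> q \<longrightarrow> p < q \<longrightarrow> q - p < d \<longrightarrow> P (p, q)"
      unfolding eventually_straddle by blast
    then show ?thesis unfolding eventually_at_right_field by (intro exI[of _ "x + d"]) auto
  qed
  then show ?thesis unfolding filterlim_def le_filter_def eventually_filtermap by blast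
qed

lemma filterlim_straddle_at_left: "filterlim (\<lambda>y. (y, x)) (straddle x) (at_left x)"
proof -
  have "eventually (\<lambda>y. P (y, x)) (at_left x)" if "eventually P (straddle x)" for P
  proof -
    from that obtain d where "d > 0" "\<forall>p q. p \<le> x \<longrightarrow> x \<le> q \<longrightarrow> p < q \<longrightarrow> q - p < d \<longrightarrow> P (p, q)"
      unfolding eventually_straddle by blast
    then show ?thesis unfolding eventually_at_left_field by (intro exI[of _ "x - d"]) auto
  qed
  then show ?thesis unfolding filterlim_def le_filter_def eventually_filtermap by blast
qed

lemma frequently_straddle_if_at_right:
  assumes "eventually (\<lambda>y. P (x, y)) (at_right x)"
  shows "frequently P (straddle x)"
proof -
  have "frequently (\<lambda>y. P (x, y)) (at_right x)"
    using assms by (rule eventually_frequently[rotated]) simp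
  then show ?thesis
    using filter_leD[OF filterlim_straddle_at_right[of x, unfolded filterlim_def], of "\<lambda>z. \<not> P z"]
    by (auto simp: frequently_def eventually_filtermap)
qed

definition slope :: "(real \<Rightarrow> real) \<Rightarrow> real \<times> real \<Rightarrow> real" where
  "slope F = (\<lambda>(p, q). (F q - F p) / (q - p))"

lemma slope_swap: "slope F (q, p) = slope F (p, q)"
  unfolding slope_def by (simp add: divide_simps) (simp add: algebra_simps)

lemma has_real_derivative_if_slope_tendsto:
  assumes "(slope F \<longlongrightarrow> L) (straddle x)"
  shows "(F has_real_derivative L) (at x)"
proof -
  have right: "((\<lambda>y. slope F (x, y)) \<longlongrightarrow> L) (at_right x)"
    by (rule filterlim_compose[OF assms filterlim_straddle_at_right])
  have left: "((\<lambda>y. slope F (x, y)) \<longlongrightarrow> L) (at_left x)"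
    using filterlim_compose[OF assms filterlim_straddle_at_left] by (simp add: slope_swap)
  have "((\<lambda>y. slope F (x, y)) \<longlongrightarrow> L) (at x)"
    using left right by (simp add: filterlim_at_split)
  then show ?thesis
    unfolding has_field_derivative_iff by (simp add: slope_def)
qed

lemma frequently_slope_gt_if_derivative:
  assumes "(F has_real_derivative D) (at x)" "c < D"
  shows "frequently (\<lambda>z. c < slope F z) (straddle x)"
proof (rule frequently_straddle_if_at_right)
  have "((\<lambda>y. slope F (x, y)) \<longlongrightarrow> D) (at_right x)"
    using assms(1) unfolding has_field_derivative_iff
    by (auto simp: slope_def filterlim_at_split)
  then show "eventually (\<lambda>y. c < slope F (x, y)) (at_right x)"
    using assms(2) by (rule order_tendstoD)
qed

lemma tendsto_if_no_rational_gap: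
  fixes g :: "'a \<Rightarrow> real"
  assumes F: "F \<noteq> bot" and bounded: "eventually (\<lambda>z. \<bar>g z\<bar> \<le> M) F"
    and no_gap: "\<And>r s. r \<in> \<rat> \<Longrightarrow> s \<in> \<rat> \<Longrightarrow> r < s \<Longrightarrow>
      eventually (\<lambda>z. r \<le> g z) F \<or> eventually (\<lambda>z. g z \<le> s) F"
  obtains L where "(g \<longlongrightarrow> L) F"
proof -
  define R where "R = {r \<in> \<rat>. eventually (\<lambda>z. r \<le> g z) F}"
  have "eventually (\<lambda>z. - of_int \<lceil>M\<rceil> \<le> g z) F"
    using bounded by (rule eventually_mono) (use le_of_int_ceiling[of M] in linarith)
  then have "- of_int \<lceil>M\<rceil> \<in> R" unfolding R_def by simp
  then have R_ne: "R \<noteq> {}" by blast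
  have R_le: "r \<le> M" if "r \<in> R" for r
  proof -
    have "eventually (\<lambda>z. r \<le> g z \<and> \<bar>g z\<bar> \<le> M) F"
      using that bounded unfolding R_def by (auto intro: eventually_conj)
    then obtain z where "r \<le> g z" "\<bar>g z\<bar> \<le> M" using eventually_happens'[OF F] by blast
    then show ?thesis by linarith
  qed
  then have R_bdd: "bdd_above R" by (rule bdd_aboveI)
  have "(g \<longlongrightarrow> Sup R) F"
  proof (rule order_tendstoI)
    fix a assume "a < Sup R"
    then obtain r where "r \<in> R" "a < r" using less_cSup_iff[OF R_ne R_bdd] by blast
    then show "eventually (\<lambda>z. a < g z) F" unfolding R_def by (auto elim: eventually_mono)
  next
    fix a assume "Sup R < a"
    obtain r where r: "r \<in> \<rat>" "Sup R < r" "r < a" using Rats_dense_in_real[OF \<open>Sup R < a\<close>] by blast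
    obtain s where s: "s \<in> \<rat>" "r < s" "s < a" using Rats_dense_in_real[OF \<open>r < a\<close>] by blast
    have "r \<notin> R" using r(2) cSup_upper[OF _ R_bdd] by force
    then have "eventually (\<lambda>z. g z \<le> s) F" using no_gap[OF r(1) s(1,2)] r(1) unfolding R_def by blast
    then show "eventually (\<lambda>z. g z < a) F" using s(3) by (auto elim: eventually_mono)
  qed
  then show ?thesis by (rule that)
qed

section \<open>Finite families of disjoint intervals\<close>

definition disjoint_intervals :: "(real \<times> real) set \<Rightarrow> bool" where
  "disjoint_intervals D \<longleftrightarrow> finite D \<and> (\<forall>p q. (p, q) \<in> D \<longrightarrow> p < q) \<and>
     (\<forall>p q p' q'. (p, q) \<in> D \<longrightarrow> (p', q') \<in> D \<longrightarrow> (p, q) \<noteq> (p', q') \<longrightarrow> q < p' \<or> q' < p)"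

definition increment_sum :: "(real \<Rightarrow> real) \<Rightarrow> (real \<times> real) set \<Rightarrow> real" where
  "increment_sum F D = (\<Sum>(p, q)\<in>D. F q - F p)"

abbreviation length_sum :: "(real \<times> real) set \<Rightarrow> real" where
  "length_sum D \<equiv> increment_sum (\<lambda>x. x) D"

definition intervals_within :: "(real \<times> real) set \<Rightarrow> (real \<times> real) set \<Rightarrow> bool" where
  "intervals_within D E \<longleftrightarrow> (\<forall>p q. (p, q) \<in> D \<longrightarrow> (\<exists>p' q'. (p', q') \<in> E \<and> p' \<le> p \<and> q \<le> q'))"

lemma intervals_within_singleton [simp]:
  "intervals_within D {(lo, hi)} \<longleftrightarrow> (\<forall>p q. (p, q) \<in> D \<longrightarrow> lo \<le> p \<and> q \<le> hi)"
  unfolding intervals_within_def by auto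

lemma intervals_within_trans:
  "intervals_within D E \<Longrightarrow> intervals_within E E' \<Longrightarrow> intervals_within D E'"
  unfolding intervals_within_def by (meson order_trans)

lemma intervals_within_pairI:
  "(p', q') \<in> E \<Longrightarrow> p' \<le> p \<Longrightarrow> q \<le> q' \<Longrightarrow> intervals_within {(p, q)} E"
  unfolding intervals_within_def by blast

lemma disjoint_intervalsD:
  assumes "disjoint_intervals D"
  shows "finite D" "(p, q) \<in> D \<Longrightarrow> p < q"
    "(p, q) \<in> D \<Longrightarrow> (p', q') \<in> D \<Longrightarrow> (p, q) \<noteq> (p', q') \<Longrightarrow> q < p' \<or> q' < p"
  using assms unfolding disjoint_intervals_def by fast+

lemma disjoint_intervals_subset:
  "disjoint_intervals D \<Longrightarrow> D' \<subseteq> D \<Longrightarrow> disjoint_intervals D'"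
  unfolding disjoint_intervals_def by (blast intro: finite_subset)

lemma intervals_within_if_subset:
  assumes "disjoint_intervals D" "\<And>p q. (p, q) \<in> D \<Longrightarrow> {p..q} \<subseteq> S" "S \<subseteq> {a..b}"
  shows "intervals_within D {(a, b)}"
  unfolding intervals_within_singleton
proof (intro allI impI)
  fix p q assume "(p, q) \<in> D"
  moreover have "p < q" using disjoint_intervalsD(2)[OF assms(1) \<open>(p, q) \<in> D\<close>] .
  ultimately have "p \<in> S" "q \<in> S" using assms(2)[of p q] by auto
  then show "a \<le> p \<and> q \<le> b" using assms(3) by auto
qed

lemma disjoint_intervals_closed_Union:
  assumes "disjoint_intervals D"
  shows "(\<Union>(p, q)\<in>D. {p..q}) \<in> lmeasurable"
    and "measure lebesgue (\<Union>(p, q)\<in>D. {p..q}) = length_sum D"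
proof -
  note D = disjoint_intervalsD[OF assms]
  show "(\<Union>(p, q)\<in>D. {p..q}) \<in> lmeasurable"
    using D(1) by (intro fmeasurable.finite_UN) auto
  have "measure lebesgue (\<Union>(p, q)\<in>D. {p..q}) = (\<Sum>I\<in>D. measure lebesgue (case I of (p, q) \<Rightarrow> {p..q}))"
  proof (rule measure_negligible_finite_Union_image[OF D(1)])
    show "pairwise (\<lambda>I J. negligible ((case I of (p, q) \<Rightarrow> {p..q}) \<inter> (case J of (p, q) \<Rightarrow> {p..q}))) D"
    proof (rule pairwiseI)
      fix I J assume "I \<in> D" "J \<in> D" "I \<noteq> J"
      then have "snd I < fst J \<or> snd J < fst I"
        using D(3)[of "fst I" "snd I" "fst J" "snd J"] by auto
      then have "(case I of (p, q) \<Rightarrow> {p..q}) \<inter> (case J of (p, q) \<Rightarrow> {p..q}) = {}"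
        by (auto simp: case_prod_beta)
      then show "negligible ((case I of (p, q) \<Rightarrow> {p..q}) \<inter> (case J of (p, q) \<Rightarrow> {p..q}))"
        by simp
    qed
  qed auto
  also have "\<dots> = length_sum D"
    unfolding increment_sum_def
  proof (rule sum.cong)
    fix I assume "I \<in> D"
    then show "measure lebesgue (case I of (p, q) \<Rightarrow> {p..q}) = (case I of (p, q) \<Rightarrow> q - p)"
      using D(2)[of "fst I" "snd I"] by (auto simp: case_prod_beta)
  qed simp
  finally show "measure lebesgue (\<Union>(p, q)\<in>D. {p..q}) = length_sum D" .
qed

lemma length_sum_le_measure:
  assumes "disjoint_intervals D" "\<And>p q. (p, q) \<in> D \<Longrightarrow> {p..q} \<subseteq> V" "V \<in> lmeasurable"
  shows "length_sum D \<le> measure lebesgue V"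
proof -
  have "measure lebesgue (\<Union>(p, q)\<in>D. {p..q}) \<le> measure lebesgue V"
    using disjoint_intervals_closed_Union(1)[OF assms(1)] assms(2,3)
    by (intro measure_mono_fmeasurable) (auto simp: fmeasurableD)
  then show ?thesis by (simp add: disjoint_intervals_closed_Union(2)[OF assms(1)])
qed

lemma measure_intervals_Un_le:
  assumes "disjoint_intervals D" "T \<in> lmeasurable"
  shows "(\<Union>(p, q)\<in>D. {p..q}) \<union> T \<in> lmeasurable"
    and "measure lebesgue ((\<Union>(p, q)\<in>D. {p..q}) \<union> T) \<le> length_sum D + measure lebesgue T"
  using disjoint_intervals_closed_Union[OF assms(1)] assms(2)
  by (auto intro: fmeasurable.Un measure_Un_le[THEN order_trans] simp: fmeasurableD)

lemma open_intervals_subset_closed: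
  fixes D :: "(real \<times> real) set"
  shows "(\<Union>(p, q)\<in>D. {p<..<q}) \<subseteq> (\<Union>(p, q)\<in>D. {p..q})"
  by (intro UN_mono) (auto split: prod.split)

lemma length_sum_scaled: "c * length_sum D = (\<Sum>(p, q)\<in>D. c * (q - p))"
  unfolding increment_sum_def by (simp add: sum_distrib_left case_prod_beta)

lemma increment_sum_ge:
  assumes "disjoint_intervals D" "\<And>p q. (p, q) \<in> D \<Longrightarrow> c \<le> slope F (p, q)"
  shows "c * length_sum D \<le> increment_sum F D"
  unfolding length_sum_scaled unfolding increment_sum_def
  using assms disjoint_intervalsD(2)[OF assms(1)]
  by (intro sum_mono) (auto simp: slope_def pos_le_divide_eq)

lemma increment_sum_le:
  assumes "disjoint_intervals D" "\<And>p q. (p, q) \<in> D \<Longrightarrow> slope F (p, q) \<le> c"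
  shows "increment_sum F D \<le> c * length_sum D"
  unfolding length_sum_scaled unfolding increment_sum_def
  using assms disjoint_intervalsD(2)[OF assms(1)]
  by (intro sum_mono) (auto simp: slope_def pos_divide_le_eq)

lemma sum_abs_increments_ge:
  assumes "disjoint_intervals D" "\<And>p q. (p, q) \<in> D \<Longrightarrow> c \<le> \<bar>slope F (p, q)\<bar>"
  shows "c * length_sum D \<le> (\<Sum>(p, q)\<in>D. \<bar>F q - F p\<bar>)"
proof -
  have "c * (q - p) \<le> \<bar>F q - F p\<bar>" if "(p, q) \<in> D" for p q
  proof -
    have "\<bar>q - p\<bar> = q - p" "q - p > 0" using disjoint_intervalsD(2)[OF assms(1) that] by auto
    then show ?thesis using assms(2)[OF that] by (simp add: slope_def abs_div pos_le_divide_eq)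
  qed
  then show ?thesis unfolding length_sum_scaled by (intro sum_mono) auto
qed

lemma abs_increment_sum_le: "\<bar>increment_sum F D\<bar> \<le> (\<Sum>(p, q)\<in>D. \<bar>F q - F p\<bar>)"
  unfolding increment_sum_def case_prod_beta by (rule sum_abs)

definition cut_out :: "(real \<times> real) set \<Rightarrow> real \<times> real \<Rightarrow> real \<times> real \<Rightarrow> (real \<times> real) set" where
  "cut_out D I J = (D - {I}) \<union> {(x, y) \<in> {(fst I, fst J), (snd J, snd I)}. x < y}"

lemma disjoint_intervals_cut_out:
  assumes D: "disjoint_intervals D" and I: "(p, q) \<in> D" and J: "p \<le> a" "a < b" "b \<le> q"
  shows "disjoint_intervals (cut_out D (p, q) (a, b))" (is "disjoint_intervals ?D'")
proof -
  note DD = disjoint_intervalsD[OF D]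
  have outside: "q' < p \<or> q < p'" if "(p', q') \<in> D - {(p, q)}" for p' q'
    using DD(3)[OF I, of p' q'] that by auto
  have piece: "(x = p \<and> y = a \<or> x = b \<and> y = q) \<and> x < y" if "(x, y) \<in> ?D' - (D - {(p, q)})" for x y
    using that unfolding cut_out_def by auto
  have "q1 < p2 \<or> q2 < p1"
    if I1: "(p1, q1) \<in> ?D'" and I2: "(p2, q2) \<in> ?D'" and "(p1, q1) \<noteq> (p2, q2)" for p1 q1 p2 q2
  proof (cases "(p1, q1) \<in> D - {(p, q)}"; cases "(p2, q2) \<in> D - {(p, q)}")
    assume "(p1, q1) \<in> D - {(p, q)}" "(p2, q2) \<in> D - {(p, q)}"
    then show ?thesis using DD(3) that(3) by blast
  next
    assume "(p1, q1) \<in> D - {(p, q)}" "(p2, q2) \<notin> D - {(p, q)}"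
    then show ?thesis using piece[of p2 q2] outside[of p1 q1] I2 J by auto
  next
    assume "(p1, q1) \<notin> D - {(p, q)}" "(p2, q2) \<in> D - {(p, q)}"
    then show ?thesis using piece[of p1 q1] outside[of p2 q2] I1 J by auto
  next
    assume "(p1, q1) \<notin> D - {(p, q)}" "(p2, q2) \<notin> D - {(p, q)}"
    then show ?thesis using piece[of p1 q1] piece[of p2 q2] I1 I2 that(3) J by auto
  qed
  moreover have "x < y" if "(x, y) \<in> ?D'" for x y
    using that DD(2) piece[of x y] by blast
  moreover have "finite ?D'"
    using DD(1) unfolding cut_out_def by (auto intro: rev_finite_subset[of "{(p, a), (b, q)}"])
  ultimately show ?thesis unfolding disjoint_intervals_def by blast
qed

lemma increment_sum_cut_out:
  assumes D: "disjoint_intervals D" and I: "(p, q) \<in> D" and J: "p \<le> a" "a < b" "b \<le> q"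
  shows "increment_sum F (cut_out D (p, q) (a, b)) = increment_sum F D - (F b - F a)"
proof -
  note DD = disjoint_intervalsD[OF D]
  define pieces where "pieces = {(x, y) \<in> {(p, a), (b, q)}. x < y}"
  have disj: "(D - {(p, q)}) \<inter> pieces = {}"
    using DD(3)[OF I] J unfolding pieces_def by fastforce
  have fin: "finite (D - {(p, q)})" "finite pieces"
    using DD(1) unfolding pieces_def by (auto intro: rev_finite_subset[of "{(p, a), (b, q)}"])
  have "cut_out D (p, q) (a, b) = (D - {(p, q)}) \<union> pieces"
    unfolding cut_out_def pieces_def by (simp only: fst_conv snd_conv)
  then have "increment_sum F (cut_out D (p, q) (a, b)) =
      increment_sum F (D - {(p, q)}) + increment_sum F pieces"
    unfolding increment_sum_def using sum.union_disjoint[OF fin disj] by simp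
  moreover have "increment_sum F pieces = (F a - F p) + (F q - F b)"
  proof -
    have "increment_sum F pieces = (\<Sum>z\<in>{(p, a), (b, q)}. F (snd z) - F (fst z))"
      unfolding increment_sum_def pieces_def case_prod_beta using J
      by (intro sum.mono_neutral_left) (auto simp: order.strict_iff_order)
    then show ?thesis using J by simp
  qed
  moreover have "increment_sum F D = increment_sum F (D - {(p, q)}) + (F q - F p)"
    unfolding increment_sum_def using DD(1) I by (simp add: sum.remove)
  ultimately show ?thesis by simp
qed

lemma intervals_within_cut_out:
  assumes "(p, q) \<in> D" "p \<le> a" "a \<le> b" "b \<le> q"
  shows "intervals_within (cut_out D (p, q) (a, b)) D"
  unfolding intervals_within_def
proof (intro allI impI)
  fix x y assume xy: "(x, y) \<in> cut_out D (p, q) (a, b)"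
  show "\<exists>p' q'. (p', q') \<in> D \<and> p' \<le> x \<and> y \<le> q'"
  proof (cases "(x, y) \<in> D")
    case False
    then have "p \<le> x" "y \<le> q" using xy assms(2-4) unfolding cut_out_def by auto
    then show ?thesis using assms(1) by blast
  qed auto
qed

lemma intervals_within_into_cut_out:
  assumes "intervals_within K D" and apart: "\<And>c d. (c, d) \<in> K \<Longrightarrow> c < d \<and> (d < a \<or> b < c)"
  shows "intervals_within K (cut_out D (p, q) (a, b))"
  unfolding intervals_within_def
proof (intro allI impI)
  fix c d assume "(c, d) \<in> K"
  then obtain p' q' where I': "(p', q') \<in> D" "p' \<le> c" "d \<le> q'"
    using assms(1) unfolding intervals_within_def by blast
  consider "(p', q') \<noteq> (p, q)" | "(p', q') = (p, q)" "d < a" | "(p', q') = (p, q)" "b < c"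
    using apart[OF \<open>(c, d) \<in> K\<close>] by blast
  then show "\<exists>p' q'. (p', q') \<in> cut_out D (p, q) (a, b) \<and> p' \<le> c \<and> d \<le> q'"
  proof cases
    case 1
    then show ?thesis using I' unfolding cut_out_def by blast
  next
    case 2
    then have "(p, a) \<in> cut_out D (p, q) (a, b)"
      using I' apart[OF \<open>(c, d) \<in> K\<close>] unfolding cut_out_def by auto
    then show ?thesis using I' 2 by (intro exI[of _ p] exI[of _ a]) auto
  next
    case 3
    then have "(b, q) \<in> cut_out D (p, q) (a, b)"
      using I' apart[OF \<open>(c, d) \<in> K\<close>] unfolding cut_out_def by auto
    then show ?thesis using I' 3 by (intro exI[of _ b] exI[of _ q]) auto
  qed
qed

lemma nested_intervals_complement:
  assumes "disjoint_intervals D1" "disjoint_intervals D2" "intervals_within D2 D1"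
  obtains G where "disjoint_intervals G" "intervals_within G D1"
    "\<And>F. increment_sum F G = increment_sum F D1 - increment_sum F D2"
proof -
  have "finite D2" using assms(2) by (rule disjoint_intervalsD)
  then have "\<forall>D1. disjoint_intervals D1 \<longrightarrow> disjoint_intervals D2 \<longrightarrow> intervals_within D2 D1 \<longrightarrow>
      (\<exists>G. disjoint_intervals G \<and> intervals_within G D1 \<and>
        (\<forall>F. increment_sum F G = increment_sum F D1 - increment_sum F D2))"
  proof (induction D2)
    case empty
    show ?case by (auto simp: intervals_within_def increment_sum_def)
  next
    case (insert J D2)
    show ?case
    proof (intro allI impI)
      fix D1 assume D1: "disjoint_intervals D1" and D2: "disjoint_intervals (insert J D2)"
        and nested: "intervals_within (insert J D2) D1"
      obtain a b where J_eq: "J = (a, b)" by fastforce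
      have "a < b" using D2 J_eq by (auto dest: disjoint_intervalsD)
      obtain p q where I: "(p, q) \<in> D1" "p \<le> a" "b \<le> q"
        using nested J_eq unfolding intervals_within_def by blast
      have "c < d \<and> (d < a \<or> b < c)" if "(c, d) \<in> D2" for c d
        using that insert.hyps(2) J_eq disjoint_intervalsD[OF D2] by fastforce
      then have "intervals_within D2 (cut_out D1 (p, q) (a, b))"
        using nested by (intro intervals_within_into_cut_out) (auto simp: intervals_within_def)
      then obtain G where G: "disjoint_intervals G" "intervals_within G (cut_out D1 (p, q) (a, b))"
          "\<forall>F. increment_sum F G = increment_sum F (cut_out D1 (p, q) (a, b)) - increment_sum F D2"
        using insert.IH disjoint_intervals_cut_out[OF D1 I(1,2) \<open>a < b\<close> I(3)]
          disjoint_intervals_subset[OF D2] by blast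
      show "\<exists>G. disjoint_intervals G \<and> intervals_within G D1 \<and>
          (\<forall>F. increment_sum F G = increment_sum F D1 - increment_sum F (insert J D2))"
        using G(1) G(3)
          intervals_within_trans[OF G(2) intervals_within_cut_out[OF I(1,2) less_imp_le[OF \<open>a < b\<close>] I(3)]]
          increment_sum_cut_out[OF D1 I(1,2) \<open>a < b\<close> I(3)] insert.hyps J_eq
        by (intro exI[of _ G]) (simp add: increment_sum_def)
    qed
  qed
  then show ?thesis using assms that by blast
qed

lemma length_sum_nonneg: "disjoint_intervals D \<Longrightarrow> 0 \<le> length_sum D"
  unfolding increment_sum_def by (intro sum_nonneg) (auto dest: disjoint_intervalsD(2))

lemma length_sum_nested_le:
  assumes "disjoint_intervals D1" "disjoint_intervals D2" "intervals_within D2 D1"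
  shows "length_sum D2 \<le> length_sum D1"
  using nested_intervals_complement[OF assms] length_sum_nonneg by (metis diff_ge_0_iff_ge)

section \<open>Absolute continuity\<close>

lemma abs_continuous_onD:
  assumes "abs_continuous_on lo hi F" "\<epsilon> > 0"
  obtains \<delta> where "\<delta> > 0" "\<And>D. disjoint_intervals D \<Longrightarrow> intervals_within D {(lo, hi)} \<Longrightarrow>
    length_sum D < \<delta> \<Longrightarrow> (\<Sum>(p, q)\<in>D. \<bar>F q - F p\<bar>) < \<epsilon>"
proof -
  obtain \<delta> where "\<delta> > 0" and \<delta>: "\<forall>(n::nat) a b. (\<forall>i<n. lo \<le> a i \<and> a i \<le> b i \<and> b i \<le> hi) \<and>
      (\<forall>i<n. \<forall>j<n. i \<noteq> j \<longrightarrow> b i \<le> a j \<or> b j \<le> a i) \<and> (\<Sum>i<n. b i - a i) < \<delta> \<longrightarrow>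
      (\<Sum>i<n. \<bar>F (b i) - F (a i)\<bar>) < \<epsilon>"
    using assms(1)[unfolded abs_continuous_on_def, rule_format, OF assms(2)] by blast
  show ?thesis
  proof (rule that[OF \<open>\<delta> > 0\<close>])
    fix D assume D: "disjoint_intervals D" and inside: "intervals_within D {(lo, hi)}"
      and small: "length_sum D < \<delta>"
    note DD = disjoint_intervalsD[OF D]
    obtain g where g: "bij_betw g {..<card D} D"
      using ex_bij_betw_nat_finite[OF DD(1)] unfolding atLeast0LessThan by blast
    have gD: "i < card D \<Longrightarrow> g i \<in> D" for i using g bij_betwE by blast
    have g_inj: "i < card D \<Longrightarrow> j < card D \<Longrightarrow> i \<noteq> j \<Longrightarrow> g i \<noteq> g j" for i j
      using g unfolding bij_betw_def inj_on_def by blast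
    have reindex: "(\<Sum>i<card D. G (g i)) = (\<Sum>I\<in>D. G I)" for G :: "real \<times> real \<Rightarrow> real"
      using sum.reindex_bij_betw[OF g] by simp
    have "(\<Sum>i<card D. \<bar>F (snd (g i)) - F (fst (g i))\<bar>) < \<epsilon>"
    proof (rule \<delta>[rule_format, of "card D" "\<lambda>i. fst (g i)" "\<lambda>i. snd (g i)"], intro conjI)
      show "\<forall>i<card D. lo \<le> fst (g i) \<and> fst (g i) \<le> snd (g i) \<and> snd (g i) \<le> hi"
      proof (intro allI impI)
        fix i assume "i < card D"
        obtain x y where xy: "g i = (x, y)" by fastforce
        have "(x, y) \<in> D" using gD[OF \<open>i < card D\<close>] xy by simp
        then show "lo \<le> fst (g i) \<and> fst (g i) \<le> snd (g i) \<and> snd (g i) \<le> hi"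
          using inside DD(2)[of x y] xy by (auto simp: less_imp_le)
      qed
      show "\<forall>i<card D. \<forall>j<card D. i \<noteq> j \<longrightarrow> snd (g i) \<le> fst (g j) \<or> snd (g j) \<le> fst (g i)"
      proof (intro allI impI)
        fix i j assume "i < card D" "j < card D" "i \<noteq> j"
        then have "g i \<in> D" "g j \<in> D" "g i \<noteq> g j" using gD g_inj by auto
        then show "snd (g i) \<le> fst (g j) \<or> snd (g j) \<le> fst (g i)"
          using DD(3)[of "fst (g i)" "snd (g i)" "fst (g j)" "snd (g j)"] by auto
      qed
      show "(\<Sum>i<card D. snd (g i) - fst (g i)) < \<delta>"
        using small reindex[of "\<lambda>I. snd I - fst I"] by (simp add: increment_sum_def case_prod_beta)
    qed
    then show "(\<Sum>(p, q)\<in>D. \<bar>F q - F p\<bar>) < \<epsilon>"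
      using reindex[of "\<lambda>I. \<bar>F (snd I) - F (fst I)\<bar>"] by (simp add: case_prod_beta)
  qed
qed

lemma abs_continuous_on_nested_intervals:
  assumes "abs_continuous_on lo hi F" "\<epsilon> > 0"
  obtains \<delta> where "\<delta> > 0" "\<And>D1 D2. disjoint_intervals D1 \<Longrightarrow> disjoint_intervals D2 \<Longrightarrow>
    intervals_within D1 {(lo, hi)} \<Longrightarrow> intervals_within D2 D1 \<Longrightarrow> length_sum D1 - length_sum D2 < \<delta> \<Longrightarrow>
    \<bar>increment_sum F D1 - increment_sum F D2\<bar> < \<epsilon>"
proof -
  obtain \<delta> where "\<delta> > 0" and \<delta>: "\<And>D. disjoint_intervals D \<Longrightarrow> intervals_within D {(lo, hi)} \<Longrightarrow>
      length_sum D < \<delta> \<Longrightarrow> (\<Sum>(p, q)\<in>D. \<bar>F q - F p\<bar>) < \<epsilon>"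
    using abs_continuous_onD[OF assms] by blast
  show ?thesis
  proof (rule that[OF \<open>\<delta> > 0\<close>])
    fix D1 D2 assume D1: "disjoint_intervals D1" "intervals_within D1 {(lo, hi)}"
      and D2: "disjoint_intervals D2" "intervals_within D2 D1"
      and small: "length_sum D1 - length_sum D2 < \<delta>"
    obtain G where G: "disjoint_intervals G" "intervals_within G D1"
      "\<And>F. increment_sum F G = increment_sum F D1 - increment_sum F D2"
      using nested_intervals_complement[OF D1(1) D2] by blast
    have "\<bar>increment_sum F G\<bar> < \<epsilon>"
      using abs_increment_sum_le[of F G] \<delta>[OF G(1) intervals_within_trans[OF G(2) D1(2)]] small G(3)
      by simp
    then show "\<bar>increment_sum F D1 - increment_sum F D2\<bar> < \<epsilon>" using G(3) by simp
  qed
qed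

lemma abs_continuous_on_diff:
  assumes "abs_continuous_on lo hi F" "abs_continuous_on lo hi G"
  shows "abs_continuous_on lo hi (\<lambda>x. F x - G x)"
  unfolding abs_continuous_on_def
proof (intro allI impI)
  fix \<epsilon> :: real assume "\<epsilon> > 0"
  then have "\<epsilon> / 2 > 0" by simp
  obtain \<delta>F where "\<delta>F > 0" and \<delta>F: "\<forall>(n::nat) a b. (\<forall>i<n. lo \<le> a i \<and> a i \<le> b i \<and> b i \<le> hi) \<and>
      (\<forall>i<n. \<forall>j<n. i \<noteq> j \<longrightarrow> b i \<le> a j \<or> b j \<le> a i) \<and> (\<Sum>i<n. b i - a i) < \<delta>F \<longrightarrow>
      (\<Sum>i<n. \<bar>F (b i) - F (a i)\<bar>) < \<epsilon> / 2"
    using assms(1)[unfolded abs_continuous_on_def, rule_format, OF \<open>\<epsilon> / 2 > 0\<close>] by blast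
  obtain \<delta>G where "\<delta>G > 0" and \<delta>G: "\<forall>(n::nat) a b. (\<forall>i<n. lo \<le> a i \<and> a i \<le> b i \<and> b i \<le> hi) \<and>
      (\<forall>i<n. \<forall>j<n. i \<noteq> j \<longrightarrow> b i \<le> a j \<or> b j \<le> a i) \<and> (\<Sum>i<n. b i - a i) < \<delta>G \<longrightarrow>
      (\<Sum>i<n. \<bar>G (b i) - G (a i)\<bar>) < \<epsilon> / 2"
    using assms(2)[unfolded abs_continuous_on_def, rule_format, OF \<open>\<epsilon> / 2 > 0\<close>] by blast
  show "\<exists>\<delta>>0. \<forall>(n::nat) a b. (\<forall>i<n. lo \<le> a i \<and> a i \<le> b i \<and> b i \<le> hi) \<and>
      (\<forall>i<n. \<forall>j<n. i \<noteq> j \<longrightarrow> b i \<le> a j \<or> b j \<le> a i) \<and> (\<Sum>i<n. b i - a i) < \<delta> \<longrightarrow>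
      (\<Sum>i<n. \<bar>F (b i) - G (b i) - (F (a i) - G (a i))\<bar>) < \<epsilon>"
  proof (intro exI[of _ "min \<delta>F \<delta>G"] conjI allI impI)
    fix n :: nat and a b :: "nat \<Rightarrow> real"
    assume family: "(\<forall>i<n. lo \<le> a i \<and> a i \<le> b i \<and> b i \<le> hi) \<and>
      (\<forall>i<n. \<forall>j<n. i \<noteq> j \<longrightarrow> b i \<le> a j \<or> b j \<le> a i) \<and> (\<Sum>i<n. b i - a i) < min \<delta>F \<delta>G"
    have "(\<Sum>i<n. \<bar>F (b i) - G (b i) - (F (a i) - G (a i))\<bar>)
        \<le> (\<Sum>i<n. \<bar>F (b i) - F (a i)\<bar>) + (\<Sum>i<n. \<bar>G (b i) - G (a i)\<bar>)"
      by (simp add: sum.distrib[symmetric] sum_mono)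
    also have "\<dots> < \<epsilon> / 2 + \<epsilon> / 2"
      using \<delta>F[rule_format, of n a b] \<delta>G[rule_format, of n a b] family by (intro add_strict_mono) auto
    finally show "(\<Sum>i<n. \<bar>F (b i) - G (b i) - (F (a i) - G (a i))\<bar>) < \<epsilon>" by simp
  qed (use \<open>\<delta>F > 0\<close> \<open>\<delta>G > 0\<close> in simp)
qed

section \<open>Vitali coverings by intervals\<close>

lemma Vitali_intervals_countable:
  fixes S U :: "real set"
  assumes "open U" "S \<subseteq> U" and freq: "\<And>x. x \<in> S \<Longrightarrow> frequently P (straddle x)"
  obtains C where "countable C" "\<And>p q. (p, q) \<in> C \<Longrightarrow> p < q \<and> {p..q} \<subseteq> U \<and> P (p, q)"
    "pairwise (\<lambda>I J. disjnt {fst I..snd I} {fst J..snd J}) C"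
    "negligible (S - (\<Union>(p, q)\<in>C. {p..q}))"
proof -
  define K where "K = {(p, q). p < q \<and> {p..q} \<subseteq> U \<and> P (p, q)}"
  define mid where "mid I = (fst I + snd I) / 2" for I :: "real \<times> real"
  define rad where "rad I = (snd I - fst I) / 2" for I :: "real \<times> real"
  have cball_eq: "cball (mid I) (rad I) = {fst I..snd I}" for I
    unfolding mid_def rad_def cball_eq_atLeastAtMost by (simp add: field_simps)
  have "\<exists>I. I \<in> K \<and> x \<in> cball (mid I) (rad I) \<and> rad I < d" if "x \<in> S" "d > 0" for x d
  proof -
    obtain \<eta> where "\<eta> > 0" "ball x \<eta> \<subseteq> U"
      using \<open>open U\<close> \<open>S \<subseteq> U\<close> \<open>x \<in> S\<close> open_contains_ball by blast
    have "eventually (\<lambda>(p, q). x - \<eta> < p \<and> q < x + \<eta>) (straddle x)"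
      using \<open>\<eta> > 0\<close> by (intro eventually_straddle_inside) auto
    with freq[OF \<open>x \<in> S\<close>] have "frequently (\<lambda>(p, q). P (p, q) \<and> x - \<eta> < p \<and> q < x + \<eta>) (straddle x)"
      by (auto elim: frequently_eventually_frequently[THEN frequently_elim1])
    moreover have "2 * d > 0" using \<open>d > 0\<close> by simp
    ultimately obtain p q
      where pq: "p \<le> x" "x \<le> q" "p < q" "q - p < 2 * d" "P (p, q)" "x - \<eta> < p" "q < x + \<eta>"
      unfolding frequently_straddle by auto
    have "{p..q} \<subseteq> ball x \<eta>"
      using pq by (auto simp: dist_real_def)
    then have "(p, q) \<in> K" using pq \<open>ball x \<eta> \<subseteq> U\<close> unfolding K_def by auto
    moreover have "x \<in> cball (mid (p, q)) (rad (p, q))"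
      unfolding cball_eq using pq by simp
    ultimately show ?thesis
      using pq by (intro exI[of _ "(p, q)"]) (auto simp: rad_def)
  qed
  then obtain C where "countable C" "C \<subseteq> K"
    "pairwise (\<lambda>I J. disjnt (cball (mid I) (rad I)) (cball (mid J) (rad J))) C"
    "negligible (S - (\<Union>I\<in>C. cball (mid I) (rad I)))"
    using Vitali_covering_theorem_cballs[of K rad S mid] unfolding K_def rad_def by force
  then show ?thesis
    by (intro that[of C]) (auto simp: cball_eq K_def case_prod_beta)
qed

lemma disjnt_intervals_separated:
  fixes p q p' q' :: real
  assumes "disjnt {p..q} {p'..q'}" "p < q" "p' < q'"
  shows "q < p' \<or> q' < p"
proof (rule ccontr)
  assume "\<not> (q < p' \<or> q' < p)"
  then have "max p p' \<in> {p..q} \<inter> {p'..q'}" using assms(2,3) by auto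
  then show False using assms(1) by (auto simp: disjnt_def)
qed

lemma countable_intervals_finite_approximation:
  fixes C :: "(real \<times> real) set"
  assumes "countable C" "\<And>p q. (p, q) \<in> C \<Longrightarrow> {p..q} \<subseteq> U" "bounded U" "e > 0"
  obtains D where "D \<subseteq> C" "finite D" "(\<Union>(p, q)\<in>C. {p..q}) \<in> lmeasurable"
    "measure lebesgue ((\<Union>(p, q)\<in>C. {p..q}) - (\<Union>(p, q)\<in>D. {p..q})) < e"
proof -
  define cl where "cl I = {fst I..snd I}" for I :: "real \<times> real"
  have cl_eq: "(\<Union>(p, q)\<in>A. {p..q}) = \<Union>(cl ` A)" for A by (auto simp: cl_def)
  have cl_U: "cl I \<subseteq> U" if "I \<in> C" for I
    using assms(2)[of "fst I" "snd I"] that unfolding cl_def by simp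
  have "\<Union>(cl ` C) \<in> sets lebesgue" using assms(1) unfolding cl_def by (intro sets.countable_UN') auto
  moreover have "bounded (\<Union>(cl ` C))" using cl_U assms(3) by (meson UN_least bounded_subset)
  ultimately have UC: "\<Union>(cl ` C) \<in> lmeasurable" by (rule bounded_set_imp_lmeasurable[rotated])
  have "measure lebesgue (\<Union>D') \<le> measure lebesgue (\<Union>(cl ` C))" if "D' \<subseteq> cl ` C" "finite D'" for D'
    using that UC by (intro measure_mono_fmeasurable) (auto intro!: sets.finite_Union simp: cl_def)
  then obtain D' where "D' \<subseteq> cl ` C" "finite D'"
    and large: "measure lebesgue (\<Union>(cl ` C)) - e < measure lebesgue (\<Union>D')"
    using measure_countable_Union_approachable[of "cl ` C" e] assms(1,4) unfolding cl_def by auto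
  then obtain D where D: "D \<subseteq> C" "finite D" "D' = cl ` D" by (meson finite_subset_image)
  have UD: "\<Union>(cl ` D) \<in> sets lebesgue" using D(2) unfolding cl_def by (intro sets.finite_UN) auto
  have "measure lebesgue (\<Union>(cl ` C) - \<Union>(cl ` D)) =
      measure lebesgue (\<Union>(cl ` C)) - measure lebesgue (\<Union>(cl ` D))"
    using UC UD D(1) by (intro measure_Diff) (auto simp: fmeasurable_def)
  then show ?thesis
    using that[OF D(1,2)] UC large D(3) unfolding cl_eq by simp
qed

lemma Vitali_intervals:
  fixes S U :: "real set"
  assumes "open U" "bounded U" "S \<subseteq> U" and freq: "\<And>x. x \<in> S \<Longrightarrow> frequently P (straddle x)"
    and "e > 0"
  obtains D T where "disjoint_intervals D" "\<And>p q. (p, q) \<in> D \<Longrightarrow> {p..q} \<subseteq> U \<and> P (p, q)"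
    "T \<in> lmeasurable" "measure lebesgue T \<le> e" "S \<subseteq> (\<Union>(p, q)\<in>D. {p<..<q}) \<union> T"
proof -
  obtain C where C: "countable C" "\<And>p q. (p, q) \<in> C \<Longrightarrow> p < q \<and> {p..q} \<subseteq> U \<and> P (p, q)"
    and C_disj: "pairwise (\<lambda>I J. disjnt {fst I..snd I} {fst J..snd J}) C"
    and C_null: "negligible (S - (\<Union>(p, q)\<in>C. {p..q}))"
    using Vitali_intervals_countable[OF assms(1,3) freq] by blast
  obtain D where D: "D \<subseteq> C" "finite D" and UC: "(\<Union>(p, q)\<in>C. {p..q}) \<in> lmeasurable"
    and small: "measure lebesgue ((\<Union>(p, q)\<in>C. {p..q}) - (\<Union>(p, q)\<in>D. {p..q})) < e"
    using countable_intervals_finite_approximation[OF C(1) _ assms(2,5)] C(2) by blast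
  define N where "N = (S - (\<Union>(p, q)\<in>C. {p..q})) \<union> (fst ` D \<union> snd ` D)"
  define T where "T = ((\<Union>(p, q)\<in>C. {p..q}) - (\<Union>(p, q)\<in>D. {p..q})) \<union> N"
  have N: "negligible N" unfolding N_def using C_null D(2) by (auto intro: negligible_finite)
  have gap: "(\<Union>(p, q)\<in>C. {p..q}) - (\<Union>(p, q)\<in>D. {p..q}) \<in> lmeasurable"
    using UC D(2) by (intro fmeasurable_Diff sets.finite_UN) auto
  show ?thesis
  proof
    have "q < p' \<or> q' < p" if "(p, q) \<in> D" "(p', q') \<in> D" "(p, q) \<noteq> (p', q')" for p q p' q'
    proof (rule disjnt_intervals_separated)
      have "(p, q) \<in> C" "(p', q') \<in> C" using D(1) that by auto
      then show "disjnt {p..q} {p'..q'}" "p < q" "p' < q'"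
        using pairwiseD[OF C_disj _ _ that(3)] C(2) by auto
    qed
    moreover have "p < q" if "(p, q) \<in> D" for p q using C(2) D(1) that by blast
    ultimately show "disjoint_intervals D"
      unfolding disjoint_intervals_def using D(2) by auto
    show "\<And>p q. (p, q) \<in> D \<Longrightarrow> {p..q} \<subseteq> U \<and> P (p, q)" using D(1) C(2) by blast
    show "T \<in> lmeasurable"
      unfolding T_def using gap negligible_imp_measurable[OF N] by (rule fmeasurable.Un)
    have "measure lebesgue T = measure lebesgue ((\<Union>(p, q)\<in>C. {p..q}) - (\<Union>(p, q)\<in>D. {p..q}))"
      unfolding T_def using gap N
      by (simp add: measure_Un_null_set fmeasurableD negligible_iff_null_sets)
    then show "measure lebesgue T \<le> e" using small by simp
    show "S \<subseteq> (\<Union>(p, q)\<in>D. {p<..<q}) \<union> T"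
    proof
      fix x assume "x \<in> S"
      show "x \<in> (\<Union>(p, q)\<in>D. {p<..<q}) \<union> T"
      proof (cases "x \<in> (\<Union>(p, q)\<in>D. {p..q})")
        case True
        then obtain p q where "(p, q) \<in> D" "p \<le> x" "x \<le> q" by auto
        then show ?thesis unfolding T_def N_def by (cases "x = p \<or> x = q") (force+)
      qed (use \<open>x \<in> S\<close> in \<open>auto simp: T_def N_def\<close>)
    qed
  qed
qed

lemma Vitali_nested_intervals:
  fixes E U :: "real set"
  assumes U: "open U" "bounded U" "E \<subseteq> U"
    and freq: "\<And>x. x \<in> E \<Longrightarrow> frequently P (straddle x)" "\<And>x. x \<in> E \<Longrightarrow> frequently Q (straddle x)"
    and "\<epsilon> > 0"
  obtains D1 D2 T where "disjoint_intervals D1" "\<And>p q. (p, q) \<in> D1 \<Longrightarrow> {p..q} \<subseteq> U \<and> P (p, q)"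
    "disjoint_intervals D2" "\<And>p q. (p, q) \<in> D2 \<Longrightarrow> Q (p, q)" "intervals_within D2 D1"
    "T \<in> lmeasurable" "measure lebesgue T \<le> 2 * \<epsilon>" "E \<subseteq> (\<Union>(p, q)\<in>D2. {p..q}) \<union> T"
proof -
  obtain D1 T1 where D1: "disjoint_intervals D1" "\<And>p q. (p, q) \<in> D1 \<Longrightarrow> {p..q} \<subseteq> U \<and> P (p, q)"
    and T1: "T1 \<in> lmeasurable" "measure lebesgue T1 \<le> \<epsilon>" and cover1: "E \<subseteq> (\<Union>(p, q)\<in>D1. {p<..<q}) \<union> T1"
    using Vitali_intervals[OF U freq(1) \<open>\<epsilon> > 0\<close>] by blast
  define U' where "U' = (\<Union>(p, q)\<in>D1. {p<..<q})"
  have "U' \<subseteq> U"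
  proof
    fix x assume "x \<in> U'"
    then obtain p q where "(p, q) \<in> D1" "x \<in> {p..q}" unfolding U'_def by auto
    then show "x \<in> U" using D1(2) by blast
  qed
  then have U': "open U'" "bounded U'" "E \<inter> U' \<subseteq> U'"
    unfolding U'_def using U(2) by (auto intro!: open_UN bounded_subset[of U] split: prod.split)
  have "frequently (\<lambda>z. Q z \<and> intervals_within {z} D1) (straddle x)" if x: "x \<in> E \<inter> U'" for x
  proof -
    obtain p q where "(p, q) \<in> D1" "p < x" "x < q" using x unfolding U'_def by auto
    then have "eventually (\<lambda>z. intervals_within {z} D1) (straddle x)"
      using eventually_straddle_inside[of p x q]
      by (auto elim!: eventually_mono intro: intervals_within_pairI less_imp_le)
    then show ?thesis using freq(2) x by (auto intro: frequently_eventually_frequently)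
  qed
  then obtain D2 T2 where D2: "disjoint_intervals D2"
      "\<And>p q. (p, q) \<in> D2 \<Longrightarrow> {p..q} \<subseteq> U' \<and> Q (p, q) \<and> intervals_within {(p, q)} D1"
    and T2: "T2 \<in> lmeasurable" "measure lebesgue T2 \<le> \<epsilon>"
    and cover2: "E \<inter> U' \<subseteq> (\<Union>(p, q)\<in>D2. {p<..<q}) \<union> T2"
    using Vitali_intervals[OF U' _ \<open>\<epsilon> > 0\<close>] by blast
  show ?thesis
  proof (rule that[OF D1 D2(1)])
    show "\<And>p q. (p, q) \<in> D2 \<Longrightarrow> Q (p, q)" using D2(2) by blast
    show "intervals_within D2 D1" using D2(2) unfolding intervals_within_def by blast
    show "T2 \<union> T1 \<in> lmeasurable" using T2(1) T1(1) by (rule fmeasurable.Un)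
    show "measure lebesgue (T2 \<union> T1) \<le> 2 * \<epsilon>"
      using measure_Un_le[OF fmeasurableD[OF T2(1)] fmeasurableD[OF T1(1)]] T1(2) T2(2) by linarith
    show "E \<subseteq> (\<Union>(p, q)\<in>D2. {p..q}) \<union> (T2 \<union> T1)"
      using cover1 cover2 open_intervals_subset_closed[of D2] unfolding U'_def by blast
  qed
qed

section \<open>Differentiation of absolutely continuous functions\<close>

lemma lebesgue_measurable_hull:
  fixes E :: "'a::euclidean_space set"
  assumes "E \<subseteq> S" "S \<in> lmeasurable"
  obtains H where "H \<in> lmeasurable" "E \<subseteq> H" "H \<subseteq> S"
    "\<And>M. M \<in> lmeasurable \<Longrightarrow> E \<subseteq> M \<Longrightarrow> measure lebesgue H \<le> measure lebesgue M"
proof -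
  obtain H0 where H0: "H0 \<in> sets lebesgue" "E \<subseteq> H0"
    "outer_measure_of lebesgue E = emeasure lebesgue H0"
    using outer_measure_of_attain[of E lebesgue] by auto
  define H where "H = S \<inter> H0"
  have H: "H \<in> lmeasurable" unfolding H_def using assms(2) H0(1) by (rule fmeasurable_Int_fmeasurable)
  show ?thesis
  proof (rule that[OF H])
    show "E \<subseteq> H" "H \<subseteq> S" unfolding H_def using assms(1) H0(2) by blast+
    fix M assume M: "M \<in> lmeasurable" "E \<subseteq> M"
    have "emeasure lebesgue H \<le> emeasure lebesgue H0"
      unfolding H_def using H0(1) by (intro emeasure_mono) auto
    also have "\<dots> = outer_measure_of lebesgue E" using H0(3) by simp
    also have "\<dots> \<le> emeasure lebesgue M"
      unfolding outer_measure_of_def using M by (intro INF_lower) (auto simp: fmeasurableD)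
    finally show "measure lebesgue H \<le> measure lebesgue M"
      using H M(1) by (simp add: emeasure_eq_measure2 ennreal_le_iff)
  qed
qed

lemma lmeasurable_outer_open:
  assumes "H \<in> lmeasurable" "H \<subseteq> S" "open S" "\<epsilon> > 0"
  obtains W where "open W" "H \<subseteq> W" "W \<subseteq> S" "W \<in> lmeasurable"
    "measure lebesgue W < measure lebesgue H + \<epsilon>"
proof -
  obtain W0 where W0: "open W0" "H \<subseteq> W0" "W0 - H \<in> lmeasurable"
    "emeasure lebesgue (W0 - H) < ennreal \<epsilon>"
    using sets_lebesgue_outer_open[OF fmeasurableD[OF assms(1)] assms(4)] by blast
  have "W0 = H \<union> (W0 - H)" using W0(2) by blast
  then have "W0 \<in> lmeasurable" using assms(1) W0(3) by (metis fmeasurable.Un)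
  moreover have "measure lebesgue W0 \<le> measure lebesgue H + measure lebesgue (W0 - H)"
    using \<open>W0 = H \<union> (W0 - H)\<close> assms(1) W0(3) by (metis fmeasurableD measure_Un_le)
  moreover have "measure lebesgue (W0 - H) < \<epsilon>"
    using W0(3,4) assms(4) by (simp add: emeasure_eq_measure2 ennreal_less_iff)
  moreover have "W0 \<inter> S \<in> lmeasurable" "measure lebesgue (W0 \<inter> S) \<le> measure lebesgue W0"
    using \<open>W0 \<in> lmeasurable\<close> assms(3)
    by (auto intro!: measure_mono_fmeasurable fmeasurable_Int_fmeasurable simp: fmeasurableD)
  ultimately show ?thesis
    using that[of "W0 \<inter> S"] W0(1,2) assms(2,3) by fastforce
qed

lemma negligible_slope_unbounded:
  assumes "abs_continuous_on a b F"
  shows "negligible {x \<in> {a<..<b}. \<forall>M. frequently (\<lambda>z. M < \<bar>slope F z\<bar>) (straddle x)}"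
    (is "negligible ?S")
proof -
  obtain \<delta> where "\<delta> > 0" and \<delta>: "\<And>D. disjoint_intervals D \<Longrightarrow> intervals_within D {(a, b)} \<Longrightarrow>
      length_sum D < \<delta> \<Longrightarrow> (\<Sum>(p, q)\<in>D. \<bar>F q - F p\<bar>) < 1"
    using abs_continuous_onD[OF assms zero_less_one] by blast
  \<comment> \<open>A Vitali cover inside a ball of radius \<delta>/4 has total length below \<delta>.\<close>
  have "negligible (?S \<inter> ball x0 (\<delta> / 4))" for x0
    unfolding negligible_outer_le
  proof (intro allI impI)
    fix e :: real assume "e > 0"
    define V where "V = ball x0 (\<delta> / 4) \<inter> {a<..<b}"
    have V: "open V" "bounded V" "V \<in> lmeasurable" unfolding V_def by (auto intro!: lmeasurable_open)
    have "measure lebesgue V \<le> measure lebesgue (ball x0 (\<delta> / 4))"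
      unfolding V_def by (intro measure_mono_fmeasurable) auto
    also have "\<dots> = \<delta> / 2" using \<open>\<delta> > 0\<close> by (simp add: ball_eq_greaterThanLessThan)
    finally have V_small: "measure lebesgue V \<le> \<delta> / 2" .
    define M where "M = 2 / e"
    have "?S \<inter> ball x0 (\<delta> / 4) \<subseteq> V" unfolding V_def by auto
    moreover have "frequently (\<lambda>z. M < \<bar>slope F z\<bar>) (straddle x)" if "x \<in> ?S \<inter> ball x0 (\<delta> / 4)" for x
      using that by blast
    moreover have "e / 2 > 0" using \<open>e > 0\<close> by simp
    ultimately obtain D T where D: "disjoint_intervals D"
        "\<And>p q. (p, q) \<in> D \<Longrightarrow> {p..q} \<subseteq> V \<and> M < \<bar>slope F (p, q)\<bar>"
      and T: "T \<in> lmeasurable" "measure lebesgue T \<le> e / 2"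
      and cover: "?S \<inter> ball x0 (\<delta> / 4) \<subseteq> (\<Union>(p, q)\<in>D. {p<..<q}) \<union> T"
      by (rule Vitali_intervals[OF V(1,2)]) blast+
    have L: "length_sum D \<le> measure lebesgue V"
      using D V(3) by (intro length_sum_le_measure) auto
    have "intervals_within D {(a, b)}"
      by (rule intervals_within_if_subset[OF D(1), of V]) (use D(2) in \<open>auto simp: V_def\<close>)
    then have small: "(\<Sum>(p, q)\<in>D. \<bar>F q - F p\<bar>) < 1"
      using \<delta> D(1) L V_small \<open>\<delta> > 0\<close> by simp
    have "M * length_sum D \<le> (\<Sum>(p, q)\<in>D. \<bar>F q - F p\<bar>)"
      using D by (intro sum_abs_increments_ge) (auto intro: less_imp_le)
    then have "M * length_sum D < 1" using small by linarith
    then have "length_sum D < e / 2"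
      using \<open>e > 0\<close> unfolding M_def by (simp add: field_simps)
    then have "measure lebesgue ((\<Union>(p, q)\<in>D. {p..q}) \<union> T) \<le> e"
      using measure_intervals_Un_le(2)[OF D(1) T(1)] T(2) by linarith
    moreover have "?S \<inter> ball x0 (\<delta> / 4) \<subseteq> (\<Union>(p, q)\<in>D. {p..q}) \<union> T"
      using cover open_intervals_subset_closed by blast
    ultimately show "\<exists>W. ?S \<inter> ball x0 (\<delta> / 4) \<subseteq> W \<and> W \<in> lmeasurable \<and> measure lebesgue W \<le> e"
      using measure_intervals_Un_le(1)[OF D(1) T(1)] by blast
  qed
  moreover have "x \<in> ?S \<inter> ball x (\<delta> / 4)" if "x \<in> ?S" for x using that \<open>\<delta> > 0\<close> by simp
  ultimately show ?thesis
    unfolding locally_negligible_alt[of ?S] by (meson open_ball openin_open_Int)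
qed

lemma oscillation_estimate:
  fixes r s m L1 L2 S1 S2 e \<epsilon> :: real
  assumes "r < s" "S1 \<le> r * L1" "s * L2 \<le> S2" "\<bar>S1 - S2\<bar> < e" "L2 \<le> L1" "L1 < m + \<epsilon>"
    "m \<le> L2 + 2 * \<epsilon>"
  shows "(s - r) * m \<le> e + (3 * \<bar>r\<bar> + 2 * (s - r)) * \<epsilon>"
proof -
  have "r * (L1 - L2) \<le> \<bar>r\<bar> * (L1 - L2)"
    using assms(5) by (intro mult_right_mono) auto
  also have "\<dots> \<le> \<bar>r\<bar> * (3 * \<epsilon>)"
    using assms(5-7) by (intro mult_left_mono) auto
  finally have "r * L1 - r * L2 \<le> 3 * (\<bar>r\<bar> * \<epsilon>)"
    by (simp add: algebra_simps)
  moreover have "(s - r) * m \<le> (s - r) * (L2 + 2 * \<epsilon>)"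
    using assms(1,7) by (intro mult_left_mono) auto
  ultimately show ?thesis
    using assms(2-4) unfolding abs_less_iff by (simp add: algebra_simps)
qed

lemma negligible_slope_oscillation:
  assumes F: "abs_continuous_on a b F" and "r < s"
  shows "negligible {x \<in> {a<..<b}. frequently (\<lambda>z. slope F z < r) (straddle x) \<and>
                                    frequently (\<lambda>z. s < slope F z) (straddle x)}"
    (is "negligible ?E")
proof -
  have "?E \<subseteq> {a<..<b}" "{a<..<b} \<in> lmeasurable" by auto
  then obtain H where H: "H \<in> lmeasurable" "?E \<subseteq> H" "H \<subseteq> {a<..<b}"
    and H_min: "\<And>M. M \<in> lmeasurable \<Longrightarrow> ?E \<subseteq> M \<Longrightarrow> measure lebesgue H \<le> measure lebesgue M"
    by (rule lebesgue_measurable_hull) blast+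
  define m where "m = measure lebesgue H"
  \<comment> \<open>Cover the set by intervals where F grows slower than r and, nested in them, by intervals
    where it grows faster than s. Absolute continuity makes the increments over both families
    nearly equal, while their total lengths are both close to m.\<close>
  have "m \<le> z" if "z > 0" for z
  proof -
    define e where "e = (s - r) * z / 2"
    have "e > 0" using \<open>r < s\<close> \<open>z > 0\<close> by (simp add: e_def)
    obtain \<delta> where "\<delta> > 0" and \<delta>: "\<And>D1 D2. disjoint_intervals D1 \<Longrightarrow> disjoint_intervals D2 \<Longrightarrow>
        intervals_within D1 {(a, b)} \<Longrightarrow> intervals_within D2 D1 \<Longrightarrow> length_sum D1 - length_sum D2 < \<delta> \<Longrightarrow>
        \<bar>increment_sum F D1 - increment_sum F D2\<bar> < e"
      using abs_continuous_on_nested_intervals[OF F \<open>e > 0\<close>] by blast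
    define K where "K = 3 * \<bar>r\<bar> + 2 * (s - r) + 1"
    define \<epsilon> where "\<epsilon> = min (\<delta> / 3) (e / K)"
    have "K > 0" using \<open>r < s\<close> by (simp add: K_def)
    then have "\<epsilon> > 0" "3 * \<epsilon> \<le> \<delta>" "K * \<epsilon> \<le> e"
      using \<open>\<delta> > 0\<close> \<open>e > 0\<close> by (auto simp: \<epsilon>_def min_def field_simps)
    obtain U where U: "open U" "H \<subseteq> U" "U \<subseteq> {a<..<b}" "U \<in> lmeasurable"
      and U_small: "measure lebesgue U < m + \<epsilon>"
      using lmeasurable_outer_open[OF H(1,3) _ \<open>\<epsilon> > 0\<close>] unfolding m_def by auto
    have "bounded U" "?E \<subseteq> U" using U(2,3) H(2) by (auto intro: bounded_subset[of "{a<..<b}"])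
    obtain D1 D2 T where D1: "disjoint_intervals D1"
        "\<And>p q. (p, q) \<in> D1 \<Longrightarrow> {p..q} \<subseteq> U \<and> slope F (p, q) < r"
      and D2: "disjoint_intervals D2" "\<And>p q. (p, q) \<in> D2 \<Longrightarrow> s < slope F (p, q)"
      and nested: "intervals_within D2 D1"
      and T: "T \<in> lmeasurable" "measure lebesgue T \<le> 2 * \<epsilon>"
      and cover: "?E \<subseteq> (\<Union>(p, q)\<in>D2. {p..q}) \<union> T"
      by (rule Vitali_nested_intervals[OF U(1) \<open>bounded U\<close> \<open>?E \<subseteq> U\<close> _ _ \<open>\<epsilon> > 0\<close>,
            of "\<lambda>z. slope F z < r" "\<lambda>z. s < slope F z"]) auto
    have "m \<le> measure lebesgue ((\<Union>(p, q)\<in>D2. {p..q}) \<union> T)"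
      unfolding m_def using cover
      by (rule H_min[rotated]) (rule measure_intervals_Un_le(1)[OF D2(1) T(1)])
    then have m_L2: "m \<le> length_sum D2 + 2 * \<epsilon>"
      using measure_intervals_Un_le(2)[OF D2(1) T(1)] T(2) by linarith
    have L1_m: "length_sum D1 < m + \<epsilon>"
      using length_sum_le_measure[OF D1(1) _ U(4)] D1(2) U_small by fastforce
    have L2_L1: "length_sum D2 \<le> length_sum D1"
      using D1(1) D2(1) nested by (rule length_sum_nested_le)
    have "intervals_within D1 {(a, b)}"
    proof (rule intervals_within_if_subset[OF D1(1)])
      show "\<And>p q. (p, q) \<in> D1 \<Longrightarrow> {p..q} \<subseteq> U" using D1(2) by blast
      show "U \<subseteq> {a..b}" using U(3) by auto
    qed
    then have gap: "\<bar>increment_sum F D1 - increment_sum F D2\<bar> < e"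
      using \<delta>[OF D1(1) D2(1) _ nested] m_L2 L1_m \<open>3 * \<epsilon> \<le> \<delta>\<close> by linarith
    have S1: "increment_sum F D1 \<le> r * length_sum D1"
      using D1 by (intro increment_sum_le) (auto intro: less_imp_le)
    have S2: "s * length_sum D2 \<le> increment_sum F D2"
      using D2 by (intro increment_sum_ge) (auto intro: less_imp_le)
    have "(s - r) * m \<le> e + (3 * \<bar>r\<bar> + 2 * (s - r)) * \<epsilon>"
      using oscillation_estimate[OF \<open>r < s\<close> S1 S2 gap L2_L1 L1_m m_L2] .
    also have "\<dots> \<le> e + K * \<epsilon>"
      using \<open>\<epsilon> > 0\<close> unfolding K_def by (simp add: distrib_right)
    also have "\<dots> \<le> (s - r) * z" using \<open>K * \<epsilon> \<le> e\<close> unfolding e_def by linarith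
    finally show "m \<le> z" using \<open>r < s\<close> by (simp add: mult_le_cancel_left_pos)
  qed
  then have "m \<le> 0" using field_le_epsilon[of m 0] by simp
  then have "measure lebesgue H = 0" unfolding m_def using measure_nonneg[of lebesgue H] by linarith
  then have "negligible H" using H(1) by (simp add: negligible_iff_measure)
  then show ?thesis using H(2) by (rule negligible_subset)
qed

lemma abs_continuous_on_negligible_nondifferentiable:
  assumes F: "abs_continuous_on a b F"
  shows "negligible {x \<in> {a<..<b}. \<not> F differentiable (at x)}"
proof -
  define B where "B = {x \<in> {a<..<b}. \<forall>M. frequently (\<lambda>z. M < \<bar>slope F z\<bar>) (straddle x)}"
  define Osc where "Osc = (\<lambda>(r, s). {x \<in> {a<..<b}. frequently (\<lambda>z. slope F z < r) (straddle x) \<and>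
                                                frequently (\<lambda>z. s < slope F z) (straddle x)})"
  define Q where "Q = {(r, s). r \<in> \<rat> \<and> s \<in> (\<rat> :: real set) \<and> r < s}"
  have "countable Q"
    unfolding Q_def
    by (rule countable_subset[of _ "\<rat> \<times> \<rat>"]) (auto intro: countable_SIGMA countable_rat)
  then have "negligible (B \<union> \<Union>(Osc ` Q))"
    unfolding B_def Q_def Osc_def
    using negligible_slope_unbounded[OF F] negligible_slope_oscillation[OF F]
    by (intro negligible_Un negligible_countable_Union) auto
  moreover have "{x \<in> {a<..<b}. \<not> F differentiable (at x)} \<subseteq> B \<union> \<Union>(Osc ` Q)"
  proof
    fix x assume x: "x \<in> {x \<in> {a<..<b}. \<not> F differentiable (at x)}"
    show "x \<in> B \<union> \<Union>(Osc ` Q)"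
    proof (rule ccontr)
      assume x_good: "x \<notin> B \<union> \<Union>(Osc ` Q)"
      then have bounded: "\<exists>M. eventually (\<lambda>z. \<bar>slope F z\<bar> \<le> M) (straddle x)"
        using x unfolding B_def by (auto simp: not_frequently not_less)
      have no_gap: "eventually (\<lambda>z. r \<le> slope F z) (straddle x) \<or>
          eventually (\<lambda>z. slope F z \<le> s) (straddle x)"
        if "r \<in> \<rat>" "s \<in> \<rat>" "r < s" for r s
      proof -
        have "x \<notin> Osc (r, s)" using x_good that unfolding Q_def by blast
        then show ?thesis using x unfolding Osc_def by (auto simp: not_frequently not_less)
      qed
      from bounded obtain M where "eventually (\<lambda>z. \<bar>slope F z\<bar> \<le> M) (straddle x)" ..
      then obtain L where "(slope F \<longlongrightarrow> L) (straddle x)"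
        using no_gap by (rule tendsto_if_no_rational_gap[OF straddle_neq_bot]) blast+
      then have "F differentiable (at x)"
        unfolding real_differentiable_def by (blast intro: has_real_derivative_if_slope_tendsto)
      then show False using x by simp
    qed
  qed
  ultimately show ?thesis by (rule negligible_subset)
qed

lemma abs_continuous_on_AE_differentiable:
  assumes "abs_continuous_on a b F"
  shows "AE t in lebesgue. t \<in> {a<..<b} \<longrightarrow> F differentiable (at t)"
proof -
  have "AE t in lebesgue. t \<notin> {x \<in> {a<..<b}. \<not> F differentiable (at x)}"
    using abs_continuous_on_negligible_nondifferentiable[OF assms]
    by (intro AE_not_in) (simp add: negligible_iff_null_sets)
  then show ?thesis by (rule AE_mp) (auto intro: AE_I2)
qed

lemma abs_continuous_on_increasing_if_derivative_ge:
  assumes g: "abs_continuous_on lo hi g" and pq: "lo \<le> p" "p < q" "q \<le> hi" and "c > 0"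
    and deriv: "AE t in lebesgue. t \<in> {p<..<q} \<longrightarrow> (\<exists>D. (g has_real_derivative D) (at t) \<and> c \<le> D)"
  shows "g p < g q"
proof -
  obtain N where N: "N \<in> null_sets lebesgue"
    and bad: "{t. \<not> (t \<in> {p<..<q} \<longrightarrow> (\<exists>D. (g has_real_derivative D) (at t) \<and> c \<le> D))} \<subseteq> N"
    using deriv unfolding eventually_ae_filter by auto
  have good: "\<exists>D. (g has_real_derivative D) (at t) \<and> c \<le> D" if "t \<in> {p<..<q} - N" for t
    using bad that by blast
  define E where "E = {p<..<q} - N"
  have E: "E \<in> lmeasurable" "measure lebesgue E = q - p"
    unfolding E_def using N pq(2) by (auto simp: measure_Diff_null_set null_setsD2 fmeasurable_Diff)
  define e where "e = c * (q - p) / 4"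
  have "e > 0" using \<open>c > 0\<close> pq(2) by (simp add: e_def)
  obtain \<delta> where "\<delta> > 0" and \<delta>: "\<And>D1 D2. disjoint_intervals D1 \<Longrightarrow> disjoint_intervals D2 \<Longrightarrow>
      intervals_within D1 {(lo, hi)} \<Longrightarrow> intervals_within D2 D1 \<Longrightarrow> length_sum D1 - length_sum D2 < \<delta> \<Longrightarrow>
      \<bar>increment_sum g D1 - increment_sum g D2\<bar> < e"
    using abs_continuous_on_nested_intervals[OF g \<open>e > 0\<close>] by blast
  define \<eta> where "\<eta> = min (\<delta> / 2) ((q - p) / 2)"
  have "\<eta> > 0" "\<eta> < \<delta>" "\<eta> \<le> (q - p) / 2" using \<open>\<delta> > 0\<close> pq(2) by (auto simp: \<eta>_def min_def)
  have freq: "frequently (\<lambda>z. c / 2 < slope g z) (straddle x)" if x: "x \<in> E" for x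
  proof -
    obtain D where "(g has_real_derivative D) (at x)" "c \<le> D" using good x unfolding E_def by blast
    moreover have "c / 2 < D" using \<open>c \<le> D\<close> \<open>c > 0\<close> by simp
    ultimately show ?thesis by (blast intro: frequently_slope_gt_if_derivative)
  qed
  have V: "open {p<..<q}" "bounded {p<..<q}" "E \<subseteq> {p<..<q}" by (auto simp: E_def)
  obtain D T where D: "disjoint_intervals D"
      "\<And>a b. (a, b) \<in> D \<Longrightarrow> {a..b} \<subseteq> {p<..<q} \<and> c / 2 < slope g (a, b)"
    and T: "T \<in> lmeasurable" "measure lebesgue T \<le> \<eta>" and cover: "E \<subseteq> (\<Union>(a, b)\<in>D. {a<..<b}) \<union> T"
    by (rule Vitali_intervals[OF V freq \<open>\<eta> > 0\<close>]) blast+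
  have "q - p \<le> length_sum D + measure lebesgue T"
  proof -
    have "E \<subseteq> (\<Union>(a, b)\<in>D. {a..b}) \<union> T" using cover open_intervals_subset_closed[of D] by blast
    then have "measure lebesgue E \<le> measure lebesgue ((\<Union>(a, b)\<in>D. {a..b}) \<union> T)"
      using measure_intervals_Un_le(1)[OF D(1) T(1)] E(1)
      by (intro measure_mono_fmeasurable) (auto simp: fmeasurableD)
    then show ?thesis using measure_intervals_Un_le(2)[OF D(1) T(1)] E(2) by linarith
  qed
  then have long: "q - p - \<eta> \<le> length_sum D" using T(2) by linarith
  have whole: "disjoint_intervals {(p, q)}" "intervals_within {(p, q)} {(lo, hi)}"
    using pq unfolding disjoint_intervals_def by auto
  have "intervals_within D {(p, q)}"
    by (rule intervals_within_if_subset[OF D(1), of "{p<..<q}"]) (use D(2) in auto)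
  then have "\<bar>(g q - g p) - increment_sum g D\<bar> < e"
    using \<delta>[OF whole(1) D(1) whole(2)] long \<open>\<eta> < \<delta>\<close> by (simp add: increment_sum_def)
  moreover have "c / 2 * length_sum D \<le> increment_sum g D"
    using D by (intro increment_sum_ge) (auto intro: less_imp_le)
  moreover have "e \<le> c / 2 * length_sum D"
  proof -
    have "e = c / 2 * ((q - p) / 2)" by (simp add: e_def)
    also have "\<dots> \<le> c / 2 * length_sum D"
      using long \<open>\<eta> \<le> (q - p) / 2\<close> \<open>c > 0\<close> by (intro mult_left_mono) auto
    finally show ?thesis .
  qed
  ultimately show ?thesis by linarith
qed

section \<open>Derivatives relative to the period interval\<close>

lemma at_within_Icc_neq_bot:
  fixes a b t :: real
  assumes "a < b" "t \<in> {a..b}"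
  shows "at t within {a..b} \<noteq> bot"
proof -
  consider "t = a" | "t = b" | "a < t" "t < b" using assms(2) by fastforce
  then show ?thesis
    by cases
      (use assms(1) in \<open>simp_all add: at_within_Icc_at_right at_within_Icc_at_left at_within_Icc_at\<close>)
qed

lemma dT_has_derivative:
  assumes "C1T T u" "T > 0" "t \<in> {0..T}"
  shows "(u has_real_derivative dT T u t) (at t within {0..T})"
proof -
  obtain D where D: "(u has_real_derivative D) (at t within {0..T})"
    using assms(1,3) unfolding C1T_def real_differentiable_def by blast
  moreover have "dT T u t = D"
    unfolding dT_def
  proof (rule the_equality)
    show "(u has_real_derivative D) (at t within {0..T})" by (rule D)
    show "d = D" if "(u has_real_derivative d) (at t within {0..T})" for d
      using has_field_derivative_unique[OF that D at_within_Icc_neq_bot[OF assms(2,3)]] .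
  qed
  ultimately show ?thesis by simp
qed

lemma C1T_continuous:
  assumes "C1T T u" "T > 0"
  shows "continuous_on {0..T} u" "continuous_on {0..T} (dT T u)"
  using DERIV_continuous_on[OF dT_has_derivative[OF assms]] assms(1) unfolding C1T_def by auto

lemma dT_has_derivative_interior:
  assumes "C1T T u" "t \<in> {0<..<T}"
  shows "(u has_real_derivative dT T u t) (at t)"
  using dT_has_derivative[OF assms(1), of t] assms(2) by (simp add: at_within_Icc_at)

lemma dT_eq_derivative:
  assumes "(G has_real_derivative L) (at t)" "t \<in> {0<..<T}"
  shows "dT T G t = L"
  unfolding dT_def
proof (rule the_equality)
  show "(G has_real_derivative L) (at t within {0..T})"
    using assms(1) by (rule has_field_derivative_at_within)
  show "d = L" if "(G has_real_derivative d) (at t within {0..T})" for d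
    using that assms DERIV_unique by (auto simp: at_within_Icc_at)
qed

lemma continuous_on_eventually_right:
  fixes g :: "real \<Rightarrow> real"
  assumes "continuous_on {a..b} g" "a \<le> t0" "t0 < b" "\<epsilon> > 0"
  shows "eventually (\<lambda>t. \<bar>g t - g t0\<bar> < \<epsilon>) (at_right t0)"
proof -
  have "continuous_on {t0..b} g" using assms(2) by (intro continuous_on_subset[OF assms(1)]) auto
  then have "(g \<longlongrightarrow> g t0) (at_right t0)" using assms(3) by (rule continuous_on_Icc_at_rightD)
  then show ?thesis using assms(4) unfolding tendsto_iff dist_real_def by blast
qed

lemma max_left_endpoint_derivative_nonpos:
  fixes w :: "real \<Rightarrow> real"
  assumes "(w has_real_derivative l) (at a within {a..c})" "a < c" "\<And>y. y \<in> {a..c} \<Longrightarrow> w y \<le> w a"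
  shows "l \<le> 0"
proof (rule tendsto_upperbound)
  show "((\<lambda>y. (w y - w a) / (y - a)) \<longlongrightarrow> l) (at_right a)"
    using assms(1) unfolding has_field_derivative_iff at_within_Icc_at_right[OF assms(2)] .
  show "eventually (\<lambda>y. (w y - w a) / (y - a) \<le> 0) (at_right a)"
    unfolding eventually_at_right_field using assms(2,3)
    by (intro exI[of _ c]) (auto intro!: divide_nonpos_pos)
qed simp

lemma max_right_endpoint_derivative_nonneg:
  fixes w :: "real \<Rightarrow> real"
  assumes "(w has_real_derivative l) (at c within {a..c})" "a < c" "\<And>y. y \<in> {a..c} \<Longrightarrow> w y \<le> w c"
  shows "0 \<le> l"
proof (rule tendsto_lowerbound)
  show "((\<lambda>y. (w y - w c) / (y - c)) \<longlongrightarrow> l) (at_left c)"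
    using assms(1) unfolding has_field_derivative_iff at_within_Icc_at_left[OF assms(2)] .
  show "eventually (\<lambda>y. 0 \<le> (w y - w c) / (y - c)) (at_left c)"
    unfolding eventually_at_left_field using assms(2,3)
    by (intro exI[of _ a]) (auto intro!: divide_nonpos_neg)
qed simp

lemma touching_point_with_equal_slopes:
  assumes T: "T > 0" and C1: "C1T T u" "C1T T v" and le: "\<forall>t\<in>{0..T}. u t \<le> v t"
    and t: "t \<in> {0..T}" "u t = v t"
  obtains t0 where "0 \<le> t0" "t0 < T" "u t0 = v t0" "dT T u t0 = dT T v t0"
proof -
  define w where "w x = u x - v x" for x
  have w_deriv: "(w has_real_derivative dT T u x - dT T v x) (at x within {0..T})"
    if "x \<in> {0..T}" for x
    unfolding w_def using dT_has_derivative[OF C1(1) T that] dT_has_derivative[OF C1(2) T that]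
    by (rule DERIV_diff)
  have w_le: "w y \<le> 0" if "y \<in> {0..T}" for y using le that unfolding w_def by auto
  show ?thesis
  proof (cases "0 < t \<and> t < T")
    case True
    have "(w has_real_derivative dT T u t - dT T v t) (at t)"
      using w_deriv[OF t(1)] True by (simp add: at_within_Icc_at)
    moreover have "\<forall>y. \<bar>t - y\<bar> < min t (T - t) \<longrightarrow> w y \<le> w t"
    proof (intro allI impI)
      fix y assume "\<bar>t - y\<bar> < min t (T - t)"
      then have "y \<in> {0..T}" by auto
      then show "w y \<le> w t" using w_le t(2) unfolding w_def by simp
    qed
    ultimately have "dT T u t - dT T v t = 0"
      using True by (intro DERIV_local_max[of w _ t "min t (T - t)"]) auto
    then show ?thesis using that[of t] True t(2) by simp
  next
    case False
    then have "t = 0 \<or> t = T" using t(1) by auto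
    then have ends: "w 0 = 0" "w T = 0" "dT T u 0 = dT T u T" "dT T v 0 = dT T v T"
      using t(2) C1 unfolding w_def C1T_def by auto
    have "dT T u 0 - dT T v 0 \<le> 0"
    proof (rule max_left_endpoint_derivative_nonpos[OF _ T])
      show "(w has_real_derivative dT T u 0 - dT T v 0) (at 0 within {0..T})" using w_deriv T by simp
      show "\<And>y. y \<in> {0..T} \<Longrightarrow> w y \<le> w 0" using w_le ends by simp
    qed
    moreover have "0 \<le> dT T u T - dT T v T"
    proof (rule max_right_endpoint_derivative_nonneg[OF _ T])
      show "(w has_real_derivative dT T u T - dT T v T) (at T within {0..T})" using w_deriv T by simp
      show "\<And>y. y \<in> {0..T} \<Longrightarrow> w y \<le> w T" using w_le ends by simp
    qed
    ultimately show ?thesis using that[of 0] T ends unfolding w_def by simp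
  qed
qed

section \<open>Strict upper solutions\<close>

lemma right_neighbourhood_of_touching_point:
  assumes T: "T > 0" and f_cont: "continuous_on UNIV f" and C1: "C1T T u" "C1T T v"
    and t0: "0 \<le> t0" "t0 < T" and touch: "u t0 = v t0" "dT T u t0 = dT T v t0" and "\<epsilon> > 0"
  obtains t1 where "t0 < t1" "t1 \<le> T" "\<And>t. t0 < t \<Longrightarrow> t < t1 \<Longrightarrow>
    \<bar>t - t0\<bar> < \<epsilon> \<and> \<bar>u t - u t0\<bar> < \<epsilon> \<and> \<bar>v t - u t0\<bar> < \<epsilon> \<and>
    \<bar>f (u t) * dT T u t - f (v t) * dT T v t\<bar> < \<epsilon>"
proof -
  note cont = C1T_continuous[OF C1(1) T] C1T_continuous[OF C1(2) T]
  define k where "k t = f (u t) * dT T u t - f (v t) * dT T v t" for t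
  have k: "continuous_on {0..T} k" "k t0 = 0"
    unfolding k_def using touch cont
    by (auto intro!: continuous_on_diff continuous_on_mult continuous_on_compose2[OF f_cont])
  have "eventually (\<lambda>t. t < T \<and> \<bar>t - t0\<bar> < \<epsilon>) (at_right t0)"
    unfolding eventually_at_right_field using \<open>\<epsilon> > 0\<close> t0
    by (intro exI[of _ "min T (t0 + \<epsilon>)"]) auto
  then have "eventually (\<lambda>t. t < T \<and> \<bar>t - t0\<bar> < \<epsilon> \<and> \<bar>u t - u t0\<bar> < \<epsilon> \<and> \<bar>v t - u t0\<bar> < \<epsilon> \<and>
      \<bar>k t\<bar> < \<epsilon>) (at_right t0)"
    using continuous_on_eventually_right[OF cont(1) t0 \<open>\<epsilon> > 0\<close>]
      continuous_on_eventually_right[OF cont(3) t0 \<open>\<epsilon> > 0\<close>]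
      continuous_on_eventually_right[OF k(1) t0 \<open>\<epsilon> > 0\<close>] touch(1) k(2)
    by (auto simp: eventually_conj_iff)
  then obtain t1 where "t0 < t1" and near: "\<And>t. t0 < t \<Longrightarrow> t < t1 \<Longrightarrow>
      t < T \<and> \<bar>t - t0\<bar> < \<epsilon> \<and> \<bar>u t - u t0\<bar> < \<epsilon> \<and> \<bar>v t - u t0\<bar> < \<epsilon> \<and> \<bar>k t\<bar> < \<epsilon>"
    unfolding eventually_at_right_field by blast
  show ?thesis
  proof (rule that[of "min t1 T"])
    show "t0 < min t1 T" using \<open>t0 < t1\<close> t0 by simp
  qed (use near in \<open>auto simp: k_def\<close>)
qed

lemma Lop_difference_lower_bound:
  assumes Lu: "((\<lambda>s. \<phi> (dT T u s)) has_real_derivative Lu) (at t)"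
    and Lv: "((\<lambda>s. \<phi> (dT T v s)) has_real_derivative Lv) (at t)" and t: "t \<in> {0<..<T}"
    and "Lop T \<phi> f h u t = 0" "Lop T \<phi> f h v t \<le> - b"
    and "\<bar>h t (u t) - h t y\<bar> < b / 4" "\<bar>h t (v t) - h t y\<bar> < b / 4"
    and "\<bar>f (u t) * dT T u t - f (v t) * dT T v t\<bar> < b / 4"
  shows "b / 4 \<le> Lu - Lv"
  using assms(4-) dT_eq_derivative[OF Lu t] dT_eq_derivative[OF Lv t]
  unfolding Lop_def abs_less_iff by linarith

lemma derivative_gap_right_of_touching_point:
  fixes \<phi> f :: "real \<Rightarrow> real" and h :: "real \<Rightarrow> real \<Rightarrow> real"
  assumes T: "T > 0" and f_cont: "continuous_on UNIV f"
    and A0: "\<forall>t0\<in>{0..T}. \<forall>u0. \<forall>\<epsilon>>0. \<exists>\<delta>>0.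
               (AE t in lebesgue. t \<in> {0..T} \<longrightarrow>
                  (\<forall>u. \<bar>t - t0\<bar> < \<delta> \<and> \<bar>u - u0\<bar> < \<delta> \<longrightarrow> \<bar>h t u - h t u0\<bar> < \<epsilon>))"
    and "b > 0"
    and u: "DD T \<phi> u" "AE t in lebesgue. t \<in> {0..T} \<longrightarrow> Lop T \<phi> f h u t = 0"
    and v: "DD T \<phi> v" "AE t in lebesgue. t \<in> {0..T} \<longrightarrow> Lop T \<phi> f h v t \<le> - b"
    and t0: "0 \<le> t0" "t0 < T" and touch: "u t0 = v t0" "dT T u t0 = dT T v t0"
  obtains t1 where "t0 < t1" "t1 \<le> T"
    "AE t in lebesgue. t \<in> {t0<..<t1} \<longrightarrow>
       (\<exists>D. ((\<lambda>s. \<phi> (dT T u s) - \<phi> (dT T v s)) has_real_derivative D) (at t) \<and> b / 4 \<le> D)"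
proof -
  have Cu: "C1T T u" and Cv: "C1T T v"
    and ACu: "abs_continuous_on 0 T (\<lambda>s. \<phi> (dT T u s))"
    and ACv: "abs_continuous_on 0 T (\<lambda>s. \<phi> (dT T v s))"
    using u(1) v(1) unfolding DD_def by auto
  have "t0 \<in> {0..T}" "b / 4 > 0" using t0 \<open>b > 0\<close> by auto
  then obtain \<delta> where "\<delta> > 0" and \<delta>: "AE t in lebesgue. t \<in> {0..T} \<longrightarrow>
      (\<forall>y. \<bar>t - t0\<bar> < \<delta> \<and> \<bar>y - u t0\<bar> < \<delta> \<longrightarrow> \<bar>h t y - h t (u t0)\<bar> < b / 4)"
    using A0 by blast
  have "min \<delta> (b / 4) > 0" using \<open>\<delta> > 0\<close> \<open>b > 0\<close> by simp
  then obtain t1 where t1: "t0 < t1" "t1 \<le> T" and near: "\<And>t. t0 < t \<Longrightarrow> t < t1 \<Longrightarrow>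
      \<bar>t - t0\<bar> < min \<delta> (b / 4) \<and> \<bar>u t - u t0\<bar> < min \<delta> (b / 4) \<and> \<bar>v t - u t0\<bar> < min \<delta> (b / 4) \<and>
      \<bar>f (u t) * dT T u t - f (v t) * dT T v t\<bar> < min \<delta> (b / 4)"
    by (rule right_neighbourhood_of_touching_point[OF T f_cont Cu Cv t0 touch]) blast+
  show ?thesis
  proof (rule that[OF t1])
    show "AE t in lebesgue. t \<in> {t0<..<t1} \<longrightarrow>
       (\<exists>D. ((\<lambda>s. \<phi> (dT T u s) - \<phi> (dT T v s)) has_real_derivative D) (at t) \<and> b / 4 \<le> D)"
      \<comment> \<open>dT is a definite description, so Lop constrains the derivative of \<phi>(u') only where it
        exists; Lebesgue's theorem makes this almost everywhere.\<close>
      using u(2) v(2) \<delta>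
        abs_continuous_on_AE_differentiable[OF ACu] abs_continuous_on_AE_differentiable[OF ACv]
    proof eventually_elim
      case (elim t)
      show ?case
      proof
        assume t: "t \<in> {t0<..<t1}"
        then have "t \<in> {0<..<T}" using t0 t1 by auto
        then obtain Lu Lv where Lu: "((\<lambda>s. \<phi> (dT T u s)) has_real_derivative Lu) (at t)"
          and Lv: "((\<lambda>s. \<phi> (dT T v s)) has_real_derivative Lv) (at t)"
          using elim(4,5) unfolding real_differentiable_def by auto
        have "t \<in> {0..T}" and nt: "\<bar>t - t0\<bar> < \<delta>" "\<bar>u t - u t0\<bar> < \<delta>" "\<bar>v t - u t0\<bar> < \<delta>"
          "\<bar>f (u t) * dT T u t - f (v t) * dT T v t\<bar> < b / 4"
          using \<open>t \<in> {0<..<T}\<close> near[of t] t by auto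
        then have "\<bar>h t (u t) - h t (u t0)\<bar> < b / 4" "\<bar>h t (v t) - h t (u t0)\<bar> < b / 4"
          using elim(3) by auto
        then have "b / 4 \<le> Lu - Lv"
          using Lop_difference_lower_bound[OF Lu Lv \<open>t \<in> {0<..<T}\<close>] elim(1,2) \<open>t \<in> {0..T}\<close> nt(4)
          by blast
        then show "\<exists>D. ((\<lambda>s. \<phi> (dT T u s) - \<phi> (dT T v s)) has_real_derivative D) (at t) \<and> b / 4 \<le> D"
          using DERIV_diff[OF Lu Lv] by blast
      qed
    qed
  qed
qed

lemma no_touching_with_equal_slopes:
  fixes \<phi> f :: "real \<Rightarrow> real" and h :: "real \<Rightarrow> real \<Rightarrow> real"
  assumes T: "T > 0" and phi_mono: "strict_mono \<phi>" and f_cont: "continuous_on UNIV f"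
    and A0: "\<forall>t0\<in>{0..T}. \<forall>u0. \<forall>\<epsilon>>0. \<exists>\<delta>>0.
               (AE t in lebesgue. t \<in> {0..T} \<longrightarrow>
                  (\<forall>u. \<bar>t - t0\<bar> < \<delta> \<and> \<bar>u - u0\<bar> < \<delta> \<longrightarrow> \<bar>h t u - h t u0\<bar> < \<epsilon>))"
    and "b > 0"
    and u: "DD T \<phi> u" "AE t in lebesgue. t \<in> {0..T} \<longrightarrow> Lop T \<phi> f h u t = 0"
    and v: "DD T \<phi> v" "AE t in lebesgue. t \<in> {0..T} \<longrightarrow> Lop T \<phi> f h v t \<le> - b"
    and le: "\<forall>t\<in>{0..T}. u t \<le> v t"
    and t0: "0 \<le> t0" "t0 < T" and touch: "u t0 = v t0" "dT T u t0 = dT T v t0"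
  shows False
proof -
  obtain t1 where t1: "t0 < t1" "t1 \<le> T" and gap: "AE t in lebesgue. t \<in> {t0<..<t1} \<longrightarrow>
      (\<exists>D. ((\<lambda>s. \<phi> (dT T u s) - \<phi> (dT T v s)) has_real_derivative D) (at t) \<and> b / 4 \<le> D)"
    using derivative_gap_right_of_touching_point[OF T f_cont A0 \<open>b > 0\<close> u v t0 touch] by blast
  have Cu: "C1T T u" and Cv: "C1T T v"
    and AC: "abs_continuous_on 0 T (\<lambda>s. \<phi> (dT T u s) - \<phi> (dT T v s))"
    using u(1) v(1) unfolding DD_def by (auto intro: abs_continuous_on_diff)
  have slope_gt: "dT T v s < dT T u s" if s: "t0 < s" "s \<le> t1" for s
  proof -
    have "AE t in lebesgue. t \<in> {t0<..<s} \<longrightarrow>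
        (\<exists>D. ((\<lambda>s. \<phi> (dT T u s) - \<phi> (dT T v s)) has_real_derivative D) (at t) \<and> b / 4 \<le> D)"
      using gap by eventually_elim (use s in auto)
    then have "\<phi> (dT T u t0) - \<phi> (dT T v t0) < \<phi> (dT T u s) - \<phi> (dT T v s)"
      by (rule abs_continuous_on_increasing_if_derivative_ge[OF AC, rotated -1])
        (use \<open>b > 0\<close> s t0 t1 in auto)
    then have "\<phi> (dT T v s) < \<phi> (dT T u s)" using touch(2) by simp
    then show ?thesis using phi_mono by (simp add: strict_mono_less)
  qed
  define w where "w x = u x - v x" for x
  have "w t0 < w t1"
  proof (rule DERIV_pos_imp_increasing_open[OF t1(1)])
    fix x assume x: "t0 < x" "x < t1"
    then have "x \<in> {0<..<T}" using t0 t1 by auto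
    then have "(w has_real_derivative dT T u x - dT T v x) (at x)"
      unfolding w_def
      by (intro DERIV_diff dT_has_derivative_interior[OF Cu] dT_has_derivative_interior[OF Cv])
    then show "\<exists>y. (w has_real_derivative y) (at x) \<and> 0 < y" using slope_gt[of x] x by auto
  next
    have "continuous_on {0..T} w"
      unfolding w_def by (intro continuous_on_diff C1T_continuous[OF Cu T] C1T_continuous[OF Cv T])
    then show "continuous_on {t0..t1} w" by (rule continuous_on_subset) (use t0 t1 in auto)
  qed
  moreover have "w t0 = 0" "w t1 \<le> 0" using touch(1) le t0 t1 unfolding w_def by auto
  ultimately show False by simp
qed

theorem lemma2p2:
  fixes T b :: real and \<phi> f :: "real \<Rightarrow> real" and h :: "real \<Rightarrow> real \<Rightarrow> real"
    and \<beta> :: "real \<Rightarrow> real"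
  assumes T: "T > 0"
    and phi_mono: "strict_mono \<phi>"
    and phi_homeo: "\<exists>\<psi>. homeomorphism UNIV UNIV \<phi> \<psi>"
    and phi0: "\<phi> 0 = 0"
    and f_cont: "continuous_on UNIV f"
    and h_car: "caratheodory T h"
    and A0: "\<forall>t0\<in>{0..T}. \<forall>u0. \<forall>\<epsilon>>0. \<exists>\<delta>>0.
               (AE t in lebesgue. t \<in> {0..T} \<longrightarrow>
                  (\<forall>u. \<bar>t - t0\<bar> < \<delta> \<and> \<bar>u - u0\<bar> < \<delta> \<longrightarrow> \<bar>h t u - h t u0\<bar> < \<epsilon>))"
    and b: "b > 0"
    and beta_D: "DD T \<phi> \<beta>"
    and beta_ineq: "AE t in lebesgue. t \<in> {0..T} \<longrightarrow> Lop T \<phi> f h \<beta> t \<le> - b"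
  shows "strict_upper_solution T \<phi> f h \<beta>"
proof -
  have "AE t in lebesgue. t \<in> {0..T} \<longrightarrow> Lop T \<phi> f h \<beta> t < 0"
    using beta_ineq by eventually_elim (use b in auto)
  moreover have "u t < \<beta> t"
    if u: "periodic_solution T \<phi> f h u" and le: "\<forall>t\<in>{0..T}. u t \<le> \<beta> t" and t: "t \<in> {0..T}" for u t
  proof (rule ccontr)
    assume "\<not> u t < \<beta> t"
    then have "u t = \<beta> t" using le t by force
    moreover have uD: "DD T \<phi> u" "AE t in lebesgue. t \<in> {0..T} \<longrightarrow> Lop T \<phi> f h u t = 0"
      using u unfolding periodic_solution_def by auto
    moreover have "C1T T u" "C1T T \<beta>" using uD(1) beta_D unfolding DD_def by auto
    ultimately obtain t0 where "0 \<le> t0" "t0 < T" "u t0 = \<beta> t0" "dT T u t0 = dT T \<beta> t0"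
      using touching_point_with_equal_slopes[OF T _ _ le t] by blast
    then show False
      using no_touching_with_equal_slopes[OF T phi_mono f_cont A0 b uD beta_D beta_ineq le] by blast
  qed
  ultimately show ?thesis
    unfolding strict_upper_solution_def using beta_D by blast
qed

end
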